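(* Let $G$ be an instance of the rank-maximal matchings problem with last-resort posts added (so ranks are $1,\dots,r+1$), let $M$ be a rank-maximal matching of $G$, let $G'$ be the reduced graph of $G$, and let $k$ be the number of posts unmatched by $M$. Let $H$ be the instance obtained from $G$ by adding $k$ new applicants $ad_1,\dots,ad_k$, each of whose preference list consists of all posts in $\mathcal{E}_1\cap\dots\cap\mathcal{E}_{r+1}$ (the sets computed by Irving et al.'s algorithm on $G$), all tied at rank $r+2$; the posts of $H$ are those of $G$, and the original applicants keep their lists. Let $I$ be the reduced graph of $H$ obtained by running Irving et al.'s algorithm on $H$. Then: (1) For each rank-maximal matching $N$ of $G$, there are exactly $k!$ distinct rank-maximal matchings of $H$ whose edges at the original applicants of $G$ are exactly the edges of $N$. (2) Every rank-maximal matching of $H$ matches all applicants and all posts of $H$, and all its edges are edges of $I$; hence it is a perfect matching of $I$. (3) If $N$ is a matching of $G$ that is not rank-maximal, then there is no perfect matching of $I$ whose edges at the original applicants of $G$ are exactly the edges of $N$.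
   Context: An instance is a bipartite graph $(\mathcal{A}\cup\mathcal{P},E)$ of applicants and posts with $E=E_1\cup\dots\cup E_R$ disjoint, where $(a,p)\in E_i$ means $p$ is an $i$-th choice of $a$ (ties allowed). The signature of a matching is $(x_1,\dots,x_R)$, $x_i$ the number of applicants matched along rank-$i$ edges; a matching is rank-maximal if its signature is lexicographically maximum. Starting from an instance with ranks $1,\dots,r$, "adding last-resort posts" means giving each applicant $a$ its own new post $\ell(a)$ with $(a,\ell(a))$ of rank $r+1$. Even/odd/unreachable: for a bipartite graph and maximum matching $N$, a vertex is even (odd) if an even (odd) length $N$-alternating path leads to it from an $N$-unmatched vertex, unreachable otherwise; independent of $N$. Irving et al.'s algorithm on an instance with maximum rank $R$: $G'_1=(\mathcal{A}\cup\mathcal{P},E_1)$, $M_1$ a maximum matching. For $i=1,\dots,R-1$: let $\mathcal{E}_i,\mathcal{O}_i,\mathcal{U}_i$ be the even/odd/unreachable vertices of $G'_i$; delete all edges of rank $>i$ incident to $\mathcal{O}_i\cup\mathcal{U}_i$; delete from $G'_i$ the edges joining $\mathcal{O}_i$ to $\mathcal{O}_i\cup\mathcal{U}_i$; add the remaining edges of $E_{i+1}$ to get $G'_{i+1}$; let $M_{i+1}$ be a maximum matching of $G'_{i+1}$ augmenting $M_i$. With $\mathcal{E}_R,\mathcal{O}_R,\mathcal{U}_R$ the even/odd/unreachable vertices of $G'_R$, the reduced graph is $G'_R$ minus the edges joining $\mathcal{O}_R$ to $\mathcal{O}_R\cup\mathcal{U}_R$. These objects do not depend on the choices made. (For $G$,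 $R=r+1$; for $H$, $R=r+2$.) The number $k$ of posts unmatched by a rank-maximal matching does not depend on the rank-maximal matching chosen. *)

theory Defs
  imports Main
begin

(* Vertices (applicants and posts) live in one type 'v.  An edge is a pair (a, p)
   with applicant a and post p.  A rank function rk assigns each edge its rank. *)

type_synonym 'v edges = "('v \<times> 'v) set"

definition Vs :: "'v edges \<Rightarrow> 'v set" where
  "Vs M = fst ` M \<union> snd ` M"

definition matching :: "'v edges \<Rightarrow> bool" where
  "matching M \<longleftrightarrow> (\<forall>e\<in>M. \<forall>e'\<in>M. e \<noteq> e' \<longrightarrow> {fst e, snd e} \<inter> {fst e', snd e'} = {})"

definition maximum_matching :: "'v edges \<Rightarrow> 'v edges \<Rightarrow> bool" where
  "maximum_matching F M \<longleftrightarrow> matching M \<and> M \<subseteq> F \<and>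
     (\<forall>M'. matching M' \<and> M' \<subseteq> F \<longrightarrow> card M' \<le> card M)"

definition perfect_matching :: "'v set \<Rightarrow> 'v edges \<Rightarrow> 'v edges \<Rightarrow> bool" where
  "perfect_matching V F M \<longleftrightarrow> matching M \<and> M \<subseteq> F \<and> V \<subseteq> Vs M"

definition adj :: "'v edges \<Rightarrow> 'v \<Rightarrow> 'v \<Rightarrow> bool" where
  "adj F u v \<longleftrightarrow> (u, v) \<in> F \<or> (v, u) \<in> F"

definition alt_path :: "'v set \<Rightarrow> 'v edges \<Rightarrow> 'v edges \<Rightarrow> 'v list \<Rightarrow> bool" where
  "alt_path V F N vs \<longleftrightarrow> vs \<noteq> [] \<and> distinct vs \<and> hd vs \<in> V \<and> hd vs \<notin> Vs N \<and>
     (\<forall>i. Suc i < length vs \<longrightarrow>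
        adj F (vs ! i) (vs ! Suc i) \<and> (adj N (vs ! i) (vs ! Suc i) \<longleftrightarrow> odd i))"

definition some_max_matching :: "'v edges \<Rightarrow> 'v edges" where
  "some_max_matching F = (SOME N. maximum_matching F N)"

definition even_set :: "'v set \<Rightarrow> 'v edges \<Rightarrow> 'v set" where
  "even_set V F = {v \<in> V. \<exists>vs. alt_path V F (some_max_matching F) vs \<and> last vs = v
                              \<and> even (length vs - 1)}"

definition odd_set :: "'v set \<Rightarrow> 'v edges \<Rightarrow> 'v set" where
  "odd_set V F = {v \<in> V. \<exists>vs. alt_path V F (some_max_matching F) vs \<and> last vs = v
                              \<and> odd (length vs - 1)}"

definition unr_set :: "'v set \<Rightarrow> 'v edges \<Rightarrow> 'v set" where
  "unr_set V F = V - even_set V F - odd_set V F"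

definition prune :: "'v set \<Rightarrow> 'v edges \<Rightarrow> 'v edges" where
  "prune V F = (let Od = odd_set V F; U = unr_set V F in
     F - {e \<in> F. (fst e \<in> Od \<and> snd e \<in> Od \<union> U) \<or> (snd e \<in> Od \<and> fst e \<in> Od \<union> U)})"

(* Irving et al.'s algorithm: irv V E rk i = (G'_i, union of O_j \<union> U_j for j < i),
   with G'_0 the empty graph (so G'_1 = rank-1 edges). *)
primrec irv :: "'v set \<Rightarrow> 'v edges \<Rightarrow> ('v \<times> 'v \<Rightarrow> nat) \<Rightarrow> nat \<Rightarrow> 'v edges \<times> 'v set" where
  "irv V E rk 0 = ({}, {})"
| "irv V E rk (Suc i) =
     (let G = fst (irv V E rk i);
          F = snd (irv V E rk i) \<union> odd_set V G \<union> unr_set V G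
      in (prune V G \<union> {e \<in> E. rk e = Suc i \<and> fst e \<notin> F \<and> snd e \<notin> F}, F))"

definition irving_graph :: "'v set \<Rightarrow> 'v edges \<Rightarrow> ('v \<times> 'v \<Rightarrow> nat) \<Rightarrow> nat \<Rightarrow> 'v edges" where
  "irving_graph V E rk i = fst (irv V E rk i)"

definition irving_even :: "'v set \<Rightarrow> 'v edges \<Rightarrow> ('v \<times> 'v \<Rightarrow> nat) \<Rightarrow> nat \<Rightarrow> 'v set" where
  "irving_even V E rk i = even_set V (irving_graph V E rk i)"

definition reduced_graph :: "'v set \<Rightarrow> 'v edges \<Rightarrow> ('v \<times> 'v \<Rightarrow> nat) \<Rightarrow> nat \<Rightarrow> 'v edges" where
  "reduced_graph V E rk R = prune V (irving_graph V E rk R)"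

definition signature :: "('v \<times> 'v \<Rightarrow> nat) \<Rightarrow> 'v edges \<Rightarrow> nat \<Rightarrow> nat" where
  "signature rk M i = card {e \<in> M. rk e = i}"

definition lex_greater :: "(nat \<Rightarrow> nat) \<Rightarrow> (nat \<Rightarrow> nat) \<Rightarrow> bool" where
  "lex_greater x y \<longleftrightarrow> (\<exists>i. y i < x i \<and> (\<forall>j<i. x j = y j))"

definition rank_maximal :: "'v edges \<Rightarrow> ('v \<times> 'v \<Rightarrow> nat) \<Rightarrow> 'v edges \<Rightarrow> bool" where
  "rank_maximal E rk M \<longleftrightarrow> matching M \<and> M \<subseteq> E \<and>
     (\<forall>M'. matching M' \<and> M' \<subseteq> E \<longrightarrow> \<not> lex_greater (signature rk M') (signature rk M))"

end

(* Irving et al.'s algorithm is correct in the following strong form: a matching using ranks at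
   most i is rank-maximal iff it lies in the pruned graph of round i and covers every vertex that
   was odd or unreachable in some round up to i.  The induction step is the Gallai--Edmonds
   decomposition of a bipartite graph, proved via the Koenig cover of a matching without
   augmenting paths.

   In H the dummy applicants only use edges of the new last rank r + 2, so a matching of H is
   rank-maximal iff its part at the original applicants is rank-maximal in G and all k dummies
   are matched.  A post left free by a rank-maximal matching of G is never deleted, hence lies in
   every even set and is acceptable to every dummy; so the rank-maximal extensions of N are the
   k! bijections between the dummies and the k posts left free by N.  Thanks to the last-resort
   posts every rank-maximal matching of G matches all applicants, so a rank-maximal matching of H
   has |A| + k = |P| edges and is perfect; by the invariant it lies in the reduced graph I.
   Conversely, a perfect matching of I satisfies the invariant for H, so it is rank-maximal and
   its part at the original applicants is rank-maximal in G. *)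

theory Submission
  imports Defs
begin

section \<open>Matchings\<close>

lemma Vs_memI: "e \<in> M \<Longrightarrow> v \<in> {fst e, snd e} \<Longrightarrow> v \<in> Vs M"
  unfolding Vs_def by auto

lemma Vs_memE: "v \<in> Vs M \<Longrightarrow> (\<And>e. e \<in> M \<Longrightarrow> v \<in> {fst e, snd e} \<Longrightarrow> thesis) \<Longrightarrow> thesis"
  unfolding Vs_def by auto

lemma Vs_mono: "M \<subseteq> N \<Longrightarrow> Vs M \<subseteq> Vs N"
  unfolding Vs_def by auto

lemma Vs_subset_Times: "M \<subseteq> S \<times> T \<Longrightarrow> Vs M \<subseteq> S \<union> T"
  unfolding Vs_def by auto

lemma Vs_converse [simp]: "Vs (converse M) = Vs M"
  unfolding Vs_def by force

lemma matching_subset: "matching M \<Longrightarrow> N \<subseteq> M \<Longrightarrow> matching N"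
  unfolding matching_def by blast

lemma matching_edge_unique:
  "matching M \<Longrightarrow> e \<in> M \<Longrightarrow> e' \<in> M \<Longrightarrow> v \<in> {fst e, snd e} \<Longrightarrow> v \<in> {fst e', snd e'} \<Longrightarrow> e = e'"
  unfolding matching_def by blast

lemma matching_converse [simp]: "matching (converse M) = matching M"
  unfolding matching_def by (auto simp: Ball_def)

lemma inj_on_fst_matching: "matching M \<Longrightarrow> inj_on fst M"
  by (rule inj_onI) (rule matching_edge_unique, auto)

lemma inj_on_snd_matching: "matching M \<Longrightarrow> inj_on snd M"
  by (rule inj_onI) (rule matching_edge_unique, auto)

lemma matching_insert:
  assumes "matching M" and "u \<notin> Vs M" and "v \<notin> Vs M"
  shows "matching (insert (u, v) M)"
  using assms unfolding matching_def Vs_def by (auto simp: image_iff)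

lemma matching_Un:
  assumes "matching M" and "matching N" and "Vs M \<inter> Vs N = {}"
  shows "matching (M \<union> N)"
  using assms unfolding matching_def Vs_def by (auto simp: image_iff)

lemma maximum_matching_converse:
  "maximum_matching F M \<Longrightarrow> maximum_matching (converse F) (converse M)"
  unfolding maximum_matching_def
  by (metis card_inverse converse_converse converse_mono matching_converse)

lemma maximum_matching_card_eq:
  "maximum_matching F M \<Longrightarrow> maximum_matching F N \<Longrightarrow> card M = card N"
  unfolding maximum_matching_def by (meson le_antisym)

lemma maximum_matching_exists:
  assumes "finite F" shows "\<exists>M. maximum_matching F M"
proof -
  define S where "S = {M. matching M \<and> M \<subseteq> F}"
  have fin: "finite (card ` S)"
    unfolding S_def using assms by (auto intro: finite_subset[of _ "Pow F"])
  have "{} \<in> S" unfolding S_def matching_def by simp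
  then obtain M where "M \<in> S" and M: "card M = Max (card ` S)"
    using Max_in[OF fin] by (metis empty_iff image_iff)
  moreover have "\<forall>M'\<in>S. card M' \<le> card M"
    unfolding M using Max_ge[OF fin] by blast
  ultimately show ?thesis unfolding S_def maximum_matching_def by blast
qed

lemma maximum_matching_some_max_matching:
  "finite F \<Longrightarrow> maximum_matching F (some_max_matching F)"
  unfolding some_max_matching_def using maximum_matching_exists by (rule someI_ex)


section \<open>Alternating and augmenting paths\<close>

lemma adj_converse [simp]: "adj (converse F) = adj F"
  unfolding adj_def by (auto intro!: ext)

lemma alt_path_converse [simp]: "alt_path V (converse F) (converse M) vs = alt_path V F M vs"
  unfolding alt_path_def by simp

lemma alt_path_nonempty: "alt_path V F M vs \<Longrightarrow> vs \<noteq> []"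
  unfolding alt_path_def by simp

lemma alt_path_prefix:
  assumes "alt_path V F M vs" and "j < length vs"
  shows "alt_path V F M (take (Suc j) vs)" and "hd (take (Suc j) vs) = hd vs"
    and "last (take (Suc j) vs) = vs ! j" and "length (take (Suc j) vs) - 1 = j"
proof -
  have "vs \<noteq> []" using assms(1) by (rule alt_path_nonempty)
  then show "hd (take (Suc j) vs) = hd vs" by (cases vs) auto
  show "last (take (Suc j) vs) = vs ! j" "length (take (Suc j) vs) - 1 = j"
    using assms(2) by (auto simp: take_Suc_conv_app_nth)
  show "alt_path V F M (take (Suc j) vs)"
    using assms \<open>hd (take (Suc j) vs) = hd vs\<close> unfolding alt_path_def by auto
qed

lemma alt_path_snoc:
  assumes ap: "alt_path V F M vs" and u: "u \<notin> set vs" and "adj F (last vs) u"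
    and "adj M (last vs) u \<longleftrightarrow> odd (length vs - 1)"
  shows "alt_path V F M (vs @ [u])"
proof -
  have ne: "vs \<noteq> []" using ap by (rule alt_path_nonempty)
  have "adj F ((vs @ [u]) ! i) ((vs @ [u]) ! Suc i) \<and> (adj M ((vs @ [u]) ! i) ((vs @ [u]) ! Suc i) \<longleftrightarrow> odd i)"
    if i: "Suc i < length (vs @ [u])" for i
  proof (cases "Suc i < length vs")
    case True
    then show ?thesis using ap unfolding alt_path_def by (auto simp: nth_append)
  next
    case False
    then have "i = length vs - 1" using i by auto
    then show ?thesis using assms ne by (simp add: nth_append last_conv_nth)
  qed
  then show ?thesis using ap u ne unfolding alt_path_def by simp
qed

definition augmenting_path :: "'v set \<Rightarrow> 'v edges \<Rightarrow> 'v edges \<Rightarrow> 'v list \<Rightarrow> bool" where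
  "augmenting_path V F M vs \<longleftrightarrow> alt_path V F M vs \<and> even (length vs) \<and> last vs \<notin> Vs M"

lemma card_even_indices: "even (n::nat) \<Longrightarrow> card {i. Suc i < n \<and> even i} = n div 2"
proof -
  assume "even n"
  then have "{i. Suc i < n \<and> even i} = (\<lambda>j. 2 * j) ` {..<n div 2}"
    by (auto simp: image_iff elim!: evenE)
  then show ?thesis by (simp add: card_image inj_on_def)
qed

lemma card_odd_indices: "even (n::nat) \<Longrightarrow> card {i. Suc i < n \<and> odd i} = n div 2 - 1"
proof -
  assume "even n"
  then obtain m where n: "n = 2 * m" by (auto elim: evenE)
  have "{i. Suc i < n \<and> odd i} = (\<lambda>j. 2 * j + 1) ` {..<m - 1}"
    unfolding n by (auto simp: image_iff elim!: oddE)
  then show ?thesis by (simp add: card_image inj_on_def n)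
qed

locale bipartite =
  fixes L R :: "'v set" and F :: "'v edges"
  assumes edges_between: "F \<subseteq> L \<times> R" and sides_disjoint: "L \<inter> R = {}"
    and finite_sides: "finite L" "finite R"
begin

lemma finite_edges: "finite F"
  using edges_between finite_sides by (meson finite_SigmaI finite_subset)

lemma bipartite_converse: "bipartite R L (converse F)"
  using edges_between sides_disjoint finite_sides by unfold_locales auto

lemma adj_iff_oriented:
  "M \<subseteq> F \<Longrightarrow> adj M u v \<longleftrightarrow> (if u \<in> L then (u, v) else (v, u)) \<in> M"
  using edges_between sides_disjoint unfolding adj_def by auto

lemma alt_path_parity:
  assumes ap: "alt_path V F M vs" and hd: "hd vs \<in> L" and j: "j < length vs"
  shows "(vs ! j \<in> L \<longleftrightarrow> even j) \<and> (vs ! j \<in> R \<longleftrightarrow> odd j)"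
  using j
proof (induction j)
  case 0
  then show ?case using hd sides_disjoint alt_path_nonempty[OF ap] by (auto simp: hd_conv_nth)
next
  case (Suc j)
  then have "adj F (vs ! j) (vs ! Suc j)" using ap unfolding alt_path_def by auto
  then have "(vs ! j \<in> L \<and> vs ! Suc j \<in> R) \<or> (vs ! j \<in> R \<and> vs ! Suc j \<in> L)"
    using edges_between unfolding adj_def by auto
  then show ?case using Suc sides_disjoint by auto
qed

definition path_edge :: "'v list \<Rightarrow> nat \<Rightarrow> 'v \<times> 'v" where
  "path_edge vs i = (if vs ! i \<in> L then (vs ! i, vs ! Suc i) else (vs ! Suc i, vs ! i))"

lemma path_edge_ends: "{fst (path_edge vs i), snd (path_edge vs i)} = {vs ! i, vs ! Suc i}"
  by (simp add: path_edge_def insert_commute)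

lemma inj_on_path_edge:
  assumes "distinct vs" shows "inj_on (path_edge vs) {i. Suc i < length vs}"
proof (rule inj_onI)
  fix i j assume i: "i \<in> {i. Suc i < length vs}" and j: "j \<in> {i. Suc i < length vs}"
    and "path_edge vs i = path_edge vs j"
  then have ends: "{vs ! i, vs ! Suc i} = {vs ! j, vs ! Suc j}" by (metis path_edge_ends)
  have idx: "vs ! a = vs ! b \<Longrightarrow> a < length vs \<Longrightarrow> b < length vs \<Longrightarrow> a = b" for a b
    using nth_eq_iff_index_eq[OF assms] by simp
  show "i = j"
  proof (cases "vs ! i = vs ! j")
    case True then show ?thesis using idx i j by auto
  next
    case False
    then have "vs ! i = vs ! Suc j" "vs ! Suc i = vs ! j" using ends by (auto simp: doubleton_eq_iff)
    then show ?thesis using idx[of i "Suc j"] idx[of "Suc i" j] i j by auto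
  qed
qed

lemma path_edge_in_matching_iff:
  assumes "alt_path V F M vs" and "M \<subseteq> F" and "Suc i < length vs"
  shows "path_edge vs i \<in> F" and "path_edge vs i \<in> M \<longleftrightarrow> odd i"
  using assms adj_iff_oriented[OF order.refl] adj_iff_oriented[OF assms(2)]
  unfolding alt_path_def path_edge_def by auto

lemma matched_vertex_on_augmenting_path:
  assumes aug: "augmenting_path V F M vs" and "matching M" and "M \<subseteq> F"
    and y: "y \<in> M" and j: "j < length vs" and v: "vs ! j \<in> {fst y, snd y}"
  shows "\<exists>q. odd q \<and> Suc q < length vs \<and> y = path_edge vs q"
proof -
  have ap: "alt_path V F M vs" and ne: "vs \<noteq> []" and "hd vs \<notin> Vs M" and "last vs \<notin> Vs M"
    using aug alt_path_nonempty unfolding augmenting_path_def alt_path_def by auto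
  have "vs ! j \<in> Vs M" using v Vs_memI[OF y] by blast
  then have "j \<noteq> 0" "j \<noteq> length vs - 1"
    using \<open>hd vs \<notin> Vs M\<close> \<open>last vs \<notin> Vs M\<close> ne
    by (metis hd_conv_nth last_conv_nth)+
  then have j1: "0 < j" "Suc j < length vs" using j by auto
  define q where "q = (if odd j then j else j - 1)"
  have q: "odd q" "Suc q < length vs" "vs ! j \<in> {vs ! q, vs ! Suc q}"
    using j1 unfolding q_def by auto
  then have "path_edge vs q \<in> M" using path_edge_in_matching_iff[OF ap \<open>M \<subseteq> F\<close>] by simp
  then have "y = path_edge vs q"
    using matching_edge_unique[OF \<open>matching M\<close> y] v q(3) path_edge_ends[of vs q] by blast
  then show ?thesis using q by blast
qed

definition augment :: "'v edges \<Rightarrow> 'v list \<Rightarrow> 'v edges" where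
  "augment M vs = (M - path_edge vs ` {i. Suc i < length vs \<and> odd i})
     \<union> path_edge vs ` {i. Suc i < length vs \<and> even i}"

context
  fixes V :: "'v set" and M :: "'v edges" and vs :: "'v list"
  assumes mM: "matching M" and MF: "M \<subseteq> F" and aug: "augmenting_path V F M vs"
begin

lemma augmenting_path_facts:
  "alt_path V F M vs" "even (length vs)" "distinct vs" "2 \<le> length vs"
proof -
  show ap: "alt_path V F M vs" "even (length vs)" "distinct vs"
    using aug unfolding augmenting_path_def alt_path_def by auto
  have "length vs \<noteq> 0" using alt_path_nonempty[OF ap(1)] by simp
  then show "2 \<le> length vs" using ap(2) by presburger
qed

lemma path_edges_odd_subset: "path_edge vs ` {i. Suc i < length vs \<and> odd i} \<subseteq> M"
  and path_edges_even_disjoint: "path_edge vs ` {i. Suc i < length vs \<and> even i} \<inter> M = {}"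
  and path_edges_even_subset: "path_edge vs ` {i. Suc i < length vs \<and> even i} \<subseteq> F"
  using path_edge_in_matching_iff[OF augmenting_path_facts(1) MF] by auto

lemma augment_subset: "augment M vs \<subseteq> F"
  unfolding augment_def using MF path_edges_even_subset by blast

lemma card_augment: "card M < card (augment M vs)"
proof -
  let ?Out = "path_edge vs ` {i. Suc i < length vs \<and> odd i}"
  let ?In = "path_edge vs ` {i. Suc i < length vs \<and> even i}"
  note n = augmenting_path_facts(2,4)
  have finM: "finite M" using MF finite_edges finite_subset by blast
  have fin_Out: "finite ?Out" using finM path_edges_odd_subset by (rule finite_subset[rotated])
  have fin_In: "finite ?In" using finite_edges path_edges_even_subset by (rule finite_subset[rotated])
  have inj: "inj_on (path_edge vs) {i. Suc i < length vs}"
    using inj_on_path_edge augmenting_path_facts(3) by blast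
  have "card ?In = length vs div 2"
    using card_even_indices[OF n(1)] by (subst card_image) (auto intro: inj_on_subset[OF inj])
  moreover have "card ?Out \<le> length vs div 2 - 1"
  proof -
    have "finite {i. Suc i < length vs \<and> odd i}" by (rule finite_subset[of _ "{..<length vs}"]) auto
    then have "card ?Out \<le> card {i. Suc i < length vs \<and> odd i}" by (rule card_image_le)
    then show ?thesis using card_odd_indices[OF n(1)] by simp
  qed
  moreover have "card (augment M vs) = card (M - ?Out) + card ?In"
    unfolding augment_def using finM fin_In path_edges_even_disjoint by (intro card_Un_disjoint) auto
  moreover have "card (M - ?Out) = card M - card ?Out"
    using fin_Out path_edges_odd_subset by (rule card_Diff_subset)
  moreover have "card ?Out \<le> card M" using path_edges_odd_subset finM by (rule card_mono[rotated])
  ultimately show ?thesis using n(2) by linarith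
qed

lemma matching_edge_at_path_edge:
  assumes y: "y \<in> M" "x \<in> {fst y, snd y}"
    and i: "Suc i < length vs" "x \<in> {fst (path_edge vs i), snd (path_edge vs i)}"
  shows "y \<in> path_edge vs ` {i. Suc i < length vs \<and> odd i}"
proof -
  have "x = vs ! i \<or> x = vs ! Suc i" using i(2) path_edge_ends[of vs i] by auto
  then obtain a where "a < length vs" "x = vs ! a" using i(1) Suc_lessD by blast
  then show ?thesis using matched_vertex_on_augmenting_path[OF aug mM MF y(1), of a] y(2) by auto
qed

lemma matching_augment: "matching (augment M vs)"
  unfolding matching_def
proof (intro ballI impI)
  let ?Out = "path_edge vs ` {i. Suc i < length vs \<and> odd i}"
  let ?In = "path_edge vs ` {i. Suc i < length vs \<and> even i}"
  have idx: "vs ! a = vs ! b \<Longrightarrow> a < length vs \<Longrightarrow> b < length vs \<Longrightarrow> a = b" for a b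
    using nth_eq_iff_index_eq[OF augmenting_path_facts(3)] by simp
  fix e e' assume e: "e \<in> augment M vs" and e': "e' \<in> augment M vs" and "e \<noteq> e'"
  show "{fst e, snd e} \<inter> {fst e', snd e'} = {}"
  proof (rule ccontr)
    assume "{fst e, snd e} \<inter> {fst e', snd e'} \<noteq> {}"
    then obtain x where x: "x \<in> {fst e, snd e}" "x \<in> {fst e', snd e'}" by blast
    consider "e \<in> M - ?Out" "e' \<in> M - ?Out" | "e \<in> ?In" "e' \<in> M - ?Out"
      | "e \<in> M - ?Out" "e' \<in> ?In" | "e \<in> ?In" "e' \<in> ?In"
      using e e' unfolding augment_def by blast
    then show False
    proof cases
      case 1 then show ?thesis using matching_edge_unique[OF mM _ _ x] \<open>e \<noteq> e'\<close> by auto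
    next
      case 2 then show ?thesis using matching_edge_at_path_edge[of e' x] x by auto
    next
      case 3 then show ?thesis using matching_edge_at_path_edge[of e x] x by auto
    next
      case 4
      then obtain i j where i: "Suc i < length vs" "e = path_edge vs i" "even i"
        and j: "Suc j < length vs" "e' = path_edge vs j" "even j" by auto
      have "x = vs ! i \<or> x = vs ! Suc i" "x = vs ! j \<or> x = vs ! Suc j"
        using x i(2) j(2) path_edge_ends[of vs i] path_edge_ends[of vs j] by auto
      then obtain a b where ab: "a = i \<or> a = Suc i" "b = j \<or> b = Suc j" "x = vs ! a" "x = vs ! b"
        by blast
      moreover have "a < length vs" "b < length vs" using ab(1,2) i(1) j(1) by auto
      ultimately have "a = b" using idx by metis
      then have "i = j" using ab(1,2) \<open>even i\<close> \<open>even j\<close> by presburger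
      then show ?thesis using i(2) j(2) \<open>e \<noteq> e'\<close> by simp
    qed
  qed
qed

text \<open>A matched vertex of the path loses its odd path edge but gains a neighbouring even one.\<close>

lemma Vs_subset_augment: "Vs M \<subseteq> Vs (augment M vs)"
proof
  let ?In = "path_edge vs ` {i. Suc i < length vs \<and> even i}"
  fix v assume "v \<in> Vs M"
  then obtain y where y: "y \<in> M" "v \<in> {fst y, snd y}" by (rule Vs_memE)
  show "v \<in> Vs (augment M vs)"
  proof (cases "y \<in> augment M vs")
    case True then show ?thesis using y(2) by (rule Vs_memI)
  next
    case False
    then obtain i where i: "Suc i < length vs" "odd i" "y = path_edge vs i"
      using y(1) unfolding augment_def by auto
    have "Suc (Suc i) \<noteq> length vs" using i(2) augmenting_path_facts(2) by presburger
    then have "Suc (Suc i) < length vs" using i(1) by linarith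
    then have "path_edge vs (i - 1) \<in> ?In" "path_edge vs (Suc i) \<in> ?In"
      using i by (auto intro!: image_eqI[of _ _ "i - 1"] image_eqI[of _ _ "Suc i"])
    then have in_aug: "path_edge vs (i - 1) \<in> augment M vs" "path_edge vs (Suc i) \<in> augment M vs"
      unfolding augment_def by auto
    have "Suc (i - 1) = i" using i(2) by (cases i) auto
    then have "v \<in> {fst (path_edge vs (i - 1)), snd (path_edge vs (i - 1))}
        \<or> v \<in> {fst (path_edge vs (Suc i)), snd (path_edge vs (Suc i))}"
      using y(2) i(3) path_edge_ends[of vs i] path_edge_ends[of vs "i - 1"] path_edge_ends[of vs "Suc i"]
      by auto
    then show ?thesis using Vs_memI[OF in_aug(1)] Vs_memI[OF in_aug(2)] by blast
  qed
qed

end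

lemma augmenting_path_enlarges:
  assumes "matching M" and "M \<subseteq> F" and "augmenting_path V F M vs"
  shows "\<exists>M'. matching M' \<and> M' \<subseteq> F \<and> card M < card M' \<and> Vs M \<subseteq> Vs M'"
  using assms
  by (intro exI[of _ "augment M vs"] conjI matching_augment augment_subset card_augment
      Vs_subset_augment)

lemma bipartite_subset: "F' \<subseteq> F \<Longrightarrow> bipartite L R F'"
  using edges_between sides_disjoint finite_sides by unfold_locales auto

end

section \<open>Koenig covers of unaugmentable matchings\<close>

lemma inj_on_endpoint_choice:
  assumes "matching M" and "\<And>e. g e \<in> {fst e, snd e}"
  shows "inj_on g M"
proof (rule inj_onI)
  fix e e' assume e: "e \<in> M" "e' \<in> M" and "g e = g e'"
  then have "g e \<in> {fst e, snd e}" "g e \<in> {fst e', snd e'}" using assms(2) by metis+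
  then show "e = e'" by (rule matching_edge_unique[OF assms(1) e])
qed

lemma card_matching_le_vertex_cover:
  assumes "matching M" and "M \<subseteq> F" and "finite C" and cover: "\<forall>e\<in>F. fst e \<in> C \<or> snd e \<in> C"
  shows "card M \<le> card C"
proof -
  define g where "g e = (if fst e \<in> C then fst e else snd e)" for e :: "'a \<times> 'a"
  have "inj_on g M" by (rule inj_on_endpoint_choice[OF \<open>matching M\<close>]) (simp add: g_def)
  moreover have "g ` M \<subseteq> C" using cover \<open>M \<subseteq> F\<close> unfolding g_def by auto
  ultimately show ?thesis using card_inj_on_le \<open>finite C\<close> by blast
qed

lemma card_le_matching_if_hits:
  assumes "finite M" and hits: "\<forall>k\<in>K. \<exists>e\<in>M. k \<in> {fst e, snd e} \<and> \<not> (fst e \<in> K \<and> snd e \<in> K)"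
  shows "card K \<le> card M"
proof -
  define g where "g e = (if fst e \<in> K then fst e else snd e)" for e :: "'a \<times> 'a"
  have "K \<subseteq> g ` M"
  proof
    fix k assume "k \<in> K"
    then obtain e where "e \<in> M" "k \<in> {fst e, snd e}" "\<not> (fst e \<in> K \<and> snd e \<in> K)"
      using hits by blast
    then have "g e = k" using \<open>k \<in> K\<close> unfolding g_def by auto
    then show "k \<in> g ` M" using \<open>e \<in> M\<close> by blast
  qed
  then have "card K \<le> card (g ` M)" using assms(1) by (intro card_mono) auto
  also have "\<dots> \<le> card M" using assms(1) by (rule card_image_le)
  finally show ?thesis .
qed

lemma vertex_cover_tight:
  assumes mM: "matching M" and "M \<subseteq> F" and "finite C" and cover: "\<forall>e\<in>F. fst e \<in> C \<or> snd e \<in> C"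
    and card: "card M = card C" and loopfree: "\<forall>e\<in>M. fst e \<noteq> snd e"
  shows "C \<subseteq> Vs M" and "\<forall>e\<in>M. \<not> (fst e \<in> C \<and> snd e \<in> C)"
proof -
  define g where "g e = (if fst e \<in> C then fst e else snd e)" for e :: "'a \<times> 'a"
  have g_end: "g e \<in> {fst e, snd e}" for e unfolding g_def by auto
  have inj: "inj_on g M" by (rule inj_on_endpoint_choice[OF mM g_end])
  have "g ` M \<subseteq> C" using cover \<open>M \<subseteq> F\<close> unfolding g_def by auto
  moreover have "card (g ` M) = card C" using card_image[OF inj] card by simp
  ultimately have gM: "g ` M = C" using card_subset_eq[OF \<open>finite C\<close>] by blast
  show "C \<subseteq> Vs M"
  proof
    fix c assume "c \<in> C"
    then obtain e where "e \<in> M" "c = g e" using gM by blast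
    then show "c \<in> Vs M" using Vs_memI[OF \<open>e \<in> M\<close> g_end[of e]] by simp
  qed
  show "\<forall>e\<in>M. \<not> (fst e \<in> C \<and> snd e \<in> C)"
  proof (intro ballI notI)
    fix e assume e: "e \<in> M" and both: "fst e \<in> C \<and> snd e \<in> C"
    then obtain e' where e': "e' \<in> M" "snd e = g e'" using gM by blast
    have "snd e \<in> {fst e', snd e'}" using e'(2) g_end[of e'] by simp
    then have "e = e'" using matching_edge_unique[OF mM e e'(1), of "snd e"] by simp
    then show False using e'(2) both loopfree e unfolding g_def by auto
  qed
qed

definition even_from :: "'v set \<Rightarrow> 'v set \<Rightarrow> 'v edges \<Rightarrow> 'v edges \<Rightarrow> 'v set" where
  "even_from V S F M = {v. \<exists>vs. alt_path V F M vs \<and> hd vs \<in> S \<and> last vs = v \<and> even (length vs - 1)}"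

definition odd_from :: "'v set \<Rightarrow> 'v set \<Rightarrow> 'v edges \<Rightarrow> 'v edges \<Rightarrow> 'v set" where
  "odd_from V S F M = {v. \<exists>vs. alt_path V F M vs \<and> hd vs \<in> S \<and> last vs = v \<and> odd (length vs - 1)}"

lemma even_from_converse [simp]: "even_from V S (converse F) (converse M) = even_from V S F M"
  unfolding even_from_def by simp

lemma odd_from_converse [simp]: "odd_from V S (converse F) (converse M) = odd_from V S F M"
  unfolding odd_from_def by simp

definition koenig_cover :: "'v set \<Rightarrow> 'v set \<Rightarrow> 'v edges \<Rightarrow> 'v edges \<Rightarrow> 'v set" where
  "koenig_cover V S F M = (S - even_from V S F M) \<union> odd_from V S F M"

lemma koenig_cover_converse [simp]: "koenig_cover V S (converse F) (converse M) = koenig_cover V S F M"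
  unfolding koenig_cover_def by simp

context bipartite
begin

lemma even_from_left_subset: "even_from V L F M \<subseteq> L"
  and odd_from_left_subset: "odd_from V L F M \<subseteq> R"
  unfolding even_from_def odd_from_def
  using alt_path_parity alt_path_nonempty by (fastforce simp: last_conv_nth)+

lemma even_from_right_subset: "even_from V R F M \<subseteq> R"
  and odd_from_right_subset: "odd_from V R F M \<subseteq> L"
  using bipartite.even_from_left_subset[OF bipartite_converse, of V "converse M"]
    bipartite.odd_from_left_subset[OF bipartite_converse, of V "converse M"]
  by simp_all

end

locale unaugmentable = bipartite +
  fixes V M
  assumes vertices: "V = L \<union> R" and matching: "matching M" and subset_edges: "M \<subseteq> F"
    and no_augmenting_path: "\<not> augmenting_path V F M vs"
begin

lemma unmatched_left_even: "v \<in> L \<Longrightarrow> v \<notin> Vs M \<Longrightarrow> v \<in> even_from V L F M"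
  unfolding even_from_def by (intro CollectI exI[of _ "[v]"]) (auto simp: alt_path_def vertices)

lemma odd_from_matched: "p \<in> odd_from V L F M \<Longrightarrow> p \<in> Vs M"
proof (rule ccontr)
  assume "p \<in> odd_from V L F M" and "p \<notin> Vs M"
  then obtain vs where vs: "alt_path V F M vs" "last vs = p" "odd (length vs - 1)"
    unfolding odd_from_def by blast
  moreover have "length vs \<noteq> 0" using alt_path_nonempty[OF vs(1)] by simp
  then have "even (length vs)" using vs(3) by presburger
  ultimately show False using no_augmenting_path \<open>p \<notin> Vs M\<close> unfolding augmenting_path_def by blast
qed

lemma even_neighbour_odd:
  assumes e: "(a, p) \<in> F" and a: "a \<in> even_from V L F M"
  shows "p \<in> odd_from V L F M"
proof -
  obtain vs where vs: "alt_path V F M vs" "hd vs \<in> L" "last vs = a" "even (length vs - 1)"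
    using a unfolding even_from_def by blast
  have ne: "vs \<noteq> []" and hd_free: "hd vs \<notin> Vs M" using vs(1) unfolding alt_path_def by auto
  have pR: "p \<in> R" using e edges_between by auto
  show ?thesis
  proof (cases "p \<in> set vs")
    case True
    then obtain j where j: "j < length vs" "vs ! j = p" by (meson in_set_conv_nth)
    then have "odd j" using alt_path_parity[OF vs(1,2) j(1)] pR by simp
    then show ?thesis unfolding odd_from_def using alt_path_prefix[OF vs(1) j(1)] vs(2) j(2)
      by (intro CollectI exI[of _ "take (Suc j) vs"] conjI) simp_all
  next
    case False
    have "\<not> adj M a p"
    proof
      assume "adj M a p"
      then have apM: "(a, p) \<in> M" using pR subset_edges edges_between sides_disjoint unfolding adj_def by auto
      have "length vs \<noteq> 1" using hd_free Vs_memI[OF apM] vs(3) ne by (cases vs) auto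
      moreover have "length vs \<noteq> 0" using ne by simp
      ultimately have n3: "length vs \<ge> 3" using vs(4) by presburger
      define i where "i = length vs - 2"
      have "Suc i = length vs - 1" using n3 unfolding i_def by simp
      then have i: "Suc i < length vs" "odd i" "vs ! Suc i = a"
        using n3 vs(3,4) ne unfolding i_def by (auto simp: last_conv_nth)
      have "adj M (vs ! i) (vs ! Suc i)" using vs(1) i unfolding alt_path_def by auto
      then have "(vs ! i, a) \<in> M \<or> (a, vs ! i) \<in> M" using i(3) unfolding adj_def by auto
      then have "vs ! i = p" using matching_edge_unique[OF matching _ apM, of _ a] by auto
      then show False using \<open>p \<notin> set vs\<close> i(1) by auto
    qed
    then have "alt_path V F M (vs @ [p])"
      using alt_path_snoc[OF vs(1) False] e vs(3,4) ne unfolding adj_def by auto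
    moreover have "odd (length (vs @ [p]) - 1)" using vs(4) ne by (cases vs) auto
    ultimately show ?thesis unfolding odd_from_def using vs(2) ne by force
  qed
qed

lemma odd_mate_even:
  assumes p: "p \<in> odd_from V L F M" and e: "(a, p) \<in> M"
  shows "a \<in> even_from V L F M"
proof -
  obtain vs where vs: "alt_path V F M vs" "hd vs \<in> L" "last vs = p" "odd (length vs - 1)"
    using p unfolding odd_from_def by blast
  have ne: "vs \<noteq> []" using vs(1) by (rule alt_path_nonempty)
  have aL: "a \<in> L" using e subset_edges edges_between by auto
  show ?thesis
  proof (cases "a \<in> set vs")
    case True
    then obtain j where j: "j < length vs" "vs ! j = a" by (meson in_set_conv_nth)
    then have "even j" using alt_path_parity[OF vs(1,2) j(1)] aL by simp
    then show ?thesis unfolding even_from_def using alt_path_prefix[OF vs(1) j(1)] vs(2) j(2)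
      by (intro CollectI exI[of _ "take (Suc j) vs"] conjI) simp_all
  next
    case False
    have "alt_path V F M (vs @ [a])"
      using alt_path_snoc[OF vs(1) False] e subset_edges vs(3,4) unfolding adj_def by auto
    moreover have "even (length (vs @ [a]) - 1)" using vs(4) ne by (cases vs) auto
    ultimately show ?thesis unfolding even_from_def using vs(2) ne by force
  qed
qed


lemma koenig_cover_covers: "(a, p) \<in> F \<Longrightarrow> a \<in> koenig_cover V L F M \<or> p \<in> koenig_cover V L F M"
  unfolding koenig_cover_def using even_neighbour_odd edges_between by blast

lemma koenig_cover_matching_edge: "(a, p) \<in> M \<Longrightarrow> a \<in> koenig_cover V L F M \<longleftrightarrow> p \<notin> koenig_cover V L F M"
  unfolding koenig_cover_def
  using even_neighbour_odd odd_mate_even odd_from_left_subset subset_edges edges_between sides_disjoint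
  by blast

lemma koenig_cover_subset_Vs: "koenig_cover V L F M \<subseteq> Vs M"
  unfolding koenig_cover_def using unmatched_left_even odd_from_matched by blast

lemma finite_koenig_cover: "finite (koenig_cover V L F M)"
  unfolding koenig_cover_def
  using odd_from_left_subset finite_sides by (meson finite_Diff finite_Un finite_subset)

lemma card_koenig_cover: "card (koenig_cover V L F M) = card M"
proof -
  define g where "g e = (if fst e \<in> koenig_cover V L F M then fst e else snd e)" for e
  have "inj_on g M" by (rule inj_on_endpoint_choice[OF matching]) (simp add: g_def)
  moreover have "g ` M = koenig_cover V L F M"
  proof
    show "g ` M \<subseteq> koenig_cover V L F M"
      using koenig_cover_covers subset_edges unfolding g_def by fastforce
    show "koenig_cover V L F M \<subseteq> g ` M"
    proof
      fix k assume k: "k \<in> koenig_cover V L F M"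
      then obtain e where e: "e \<in> M" "k \<in> {fst e, snd e}"
        using koenig_cover_subset_Vs by (blast elim: Vs_memE)
      then have "g e = k" using k koenig_cover_matching_edge[of "fst e" "snd e"] unfolding g_def by auto
      then show "k \<in> g ` M" using e(1) by blast
    qed
  qed
  ultimately show ?thesis using card_image by fastforce
qed

lemma koenig_cover_vertex_cover: "\<forall>e\<in>F. fst e \<in> koenig_cover V L F M \<or> snd e \<in> koenig_cover V L F M"
  using koenig_cover_covers by auto

theorem maximum_matching: "maximum_matching F M"
  unfolding maximum_matching_def
  using matching subset_edges card_koenig_cover finite_koenig_cover koenig_cover_vertex_cover
    card_matching_le_vertex_cover by metis

lemma koenig_cover_tight:
  assumes "maximum_matching F Z"
  shows "koenig_cover V L F M \<subseteq> Vs Z" and "\<forall>e\<in>Z. \<not> (fst e \<in> koenig_cover V L F M \<and> snd e \<in> koenig_cover V L F M)"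
proof -
  have "matching Z" "Z \<subseteq> F" using assms unfolding maximum_matching_def by auto
  moreover have "card Z = card (koenig_cover V L F M)"
    using maximum_matching_card_eq[OF assms maximum_matching] card_koenig_cover by simp
  moreover have "\<forall>e\<in>Z. fst e \<noteq> snd e" using \<open>Z \<subseteq> F\<close> edges_between sides_disjoint by fastforce
  ultimately show "koenig_cover V L F M \<subseteq> Vs Z" "\<forall>e\<in>Z. \<not> (fst e \<in> koenig_cover V L F M \<and> snd e \<in> koenig_cover V L F M)"
    using vertex_cover_tight[OF _ _ finite_koenig_cover koenig_cover_vertex_cover] by blast+
qed

text \<open>Along an alternating path starting outside the cover, the cover is entered exactly at the
  odd positions: a non-matching edge leaving a vertex outside the cover must enter it, and a
  matching edge has exactly one end in it.\<close>

lemma alt_path_koenig_cover: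
  assumes ap: "alt_path V F M vs" and hd: "hd vs \<notin> koenig_cover V L F M" and j: "j < length vs"
  shows "vs ! j \<in> koenig_cover V L F M \<longleftrightarrow> odd j"
  using j
proof (induction j)
  case 0
  then show ?case using hd alt_path_nonempty[OF ap] by (simp add: hd_conv_nth)
next
  case (Suc j)
  have step: "adj F (vs ! j) (vs ! Suc j)" "adj M (vs ! j) (vs ! Suc j) \<longleftrightarrow> odd j"
    using ap Suc.prems unfolding alt_path_def by auto
  show ?case
  proof (cases "even j")
    case True
    then show ?thesis using Suc step(1) koenig_cover_covers unfolding adj_def by auto
  next
    case False
    then show ?thesis using Suc step koenig_cover_matching_edge unfolding adj_def by auto
  qed
qed

lemma even_from_left_disjoint_odd_from_right: "even_from V L F M \<inter> odd_from V R F M = {}"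
proof (rule ccontr)
  assume "even_from V L F M \<inter> odd_from V R F M \<noteq> {}"
  then obtain v where v: "v \<in> even_from V L F M" "v \<in> odd_from V R F M" by blast
  obtain vs where vs: "alt_path V F M vs" "hd vs \<in> R" "last vs = v" "odd (length vs - 1)"
    using v(2) unfolding odd_from_def by blast
  have ne: "vs \<noteq> []" and "hd vs \<notin> Vs M" using vs(1) unfolding alt_path_def by auto
  then have "hd vs \<notin> koenig_cover V L F M" using koenig_cover_subset_Vs by blast
  then have "v \<in> koenig_cover V L F M"
    using alt_path_koenig_cover[OF vs(1), of "length vs - 1"] vs(3,4) ne by (simp add: last_conv_nth)
  then show False
    using v(1) even_from_left_subset odd_from_left_subset sides_disjoint unfolding koenig_cover_def by blast
qed

end

section \<open>The Gallai--Edmonds decomposition of a bipartite graph\<close>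

lemma prune_iff:
  "e \<in> prune V F \<longleftrightarrow> e \<in> F \<and>
     \<not> ((fst e \<in> odd_set V F \<and> snd e \<in> odd_set V F \<union> unr_set V F)
       \<or> (snd e \<in> odd_set V F \<and> fst e \<in> odd_set V F \<union> unr_set V F))"
  unfolding prune_def Let_def by auto

lemma prune_subset: "prune V F \<subseteq> F"
  unfolding prune_def Let_def by auto

lemma odd_set_subset: "odd_set V F \<subseteq> V"
  unfolding odd_set_def by auto

context bipartite
begin

lemma maximum_matching_unaugmentable:
  assumes "maximum_matching F M"
  shows "unaugmentable L R F (L \<union> R) M"
proof -
  have "matching M" "M \<subseteq> F" using assms unfolding maximum_matching_def by auto
  moreover have "\<not> augmenting_path (L \<union> R) F M vs" for vs
    using augmenting_path_enlarges[OF \<open>matching M\<close> \<open>M \<subseteq> F\<close>] assms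
    unfolding maximum_matching_def by (meson not_le)
  ultimately show ?thesis by unfold_locales auto
qed

lemma some_max_matching_unaugmentable:
  "unaugmentable L R F (L \<union> R) (some_max_matching F)"
  "unaugmentable R L (converse F) (L \<union> R) (converse (some_max_matching F))"
proof -
  have max: "maximum_matching F (some_max_matching F)"
    using maximum_matching_some_max_matching finite_edges by blast
  show "unaugmentable L R F (L \<union> R) (some_max_matching F)"
    using maximum_matching_unaugmentable[OF max] .
  show "unaugmentable R L (converse F) (L \<union> R) (converse (some_max_matching F))"
    using bipartite.maximum_matching_unaugmentable[OF bipartite_converse
        maximum_matching_converse[OF max]]
    by (simp add: Un_commute)
qed

lemma even_set_eq:
  "even_set (L \<union> R) F
     = even_from (L \<union> R) L F (some_max_matching F) \<union> even_from (L \<union> R) R F (some_max_matching F)"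
    (is "_ = ?EL \<union> ?ER")
proof
  show "even_set (L \<union> R) F \<subseteq> ?EL \<union> ?ER"
    unfolding even_set_def even_from_def alt_path_def by blast
  show "?EL \<union> ?ER \<subseteq> even_set (L \<union> R) F"
  proof
    fix v assume v: "v \<in> ?EL \<union> ?ER"
    then have "v \<in> L \<union> R" using even_from_left_subset even_from_right_subset by blast
    then show "v \<in> even_set (L \<union> R) F" using v unfolding even_set_def even_from_def by blast
  qed
qed

lemma odd_set_eq:
  "odd_set (L \<union> R) F
     = odd_from (L \<union> R) L F (some_max_matching F) \<union> odd_from (L \<union> R) R F (some_max_matching F)"
    (is "_ = ?OL \<union> ?OR")
proof
  show "odd_set (L \<union> R) F \<subseteq> ?OL \<union> ?OR"
    unfolding odd_set_def odd_from_def alt_path_def by blast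
  show "?OL \<union> ?OR \<subseteq> odd_set (L \<union> R) F"
  proof
    fix v assume v: "v \<in> ?OL \<union> ?OR"
    then have "v \<in> L \<union> R" using odd_from_left_subset odd_from_right_subset by blast
    then show "v \<in> odd_set (L \<union> R) F" using v unfolding odd_set_def odd_from_def by blast
  qed
qed

lemma even_from_disjoint_odd_from:
  "even_from (L \<union> R) L F (some_max_matching F) \<inter> odd_from (L \<union> R) R F (some_max_matching F) = {}"
  "even_from (L \<union> R) R F (some_max_matching F) \<inter> odd_from (L \<union> R) L F (some_max_matching F) = {}"
  using unaugmentable.even_from_left_disjoint_odd_from_right[OF some_max_matching_unaugmentable(1)]
    unaugmentable.even_from_left_disjoint_odd_from_right[OF some_max_matching_unaugmentable(2)]
  by simp_all

lemma even_odd_disjoint: "even_set (L \<union> R) F \<inter> odd_set (L \<union> R) F = {}"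
  unfolding even_set_eq odd_set_eq
  using even_from_left_subset odd_from_left_subset even_from_right_subset odd_from_right_subset
    even_from_disjoint_odd_from sides_disjoint
  by blast

lemma odd_or_unreachable_iff:
  "v \<in> odd_set (L \<union> R) F \<union> unr_set (L \<union> R) F \<longleftrightarrow> v \<in> L \<union> R \<and> v \<notin> even_set (L \<union> R) F"
  using odd_set_subset[of "L \<union> R" F] even_odd_disjoint unfolding unr_set_def by auto

lemma koenig_covers_some_max_matching:
  "koenig_cover (L \<union> R) L F (some_max_matching F)
     = (L - even_set (L \<union> R) F) \<union> (R \<inter> odd_set (L \<union> R) F)"
  "koenig_cover (L \<union> R) R F (some_max_matching F)
     = (R - even_set (L \<union> R) F) \<union> (L \<inter> odd_set (L \<union> R) F)"
  unfolding koenig_cover_def even_set_eq odd_set_eq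
  using even_from_left_subset[of "L \<union> R" "some_max_matching F"]
    odd_from_left_subset[of "L \<union> R" "some_max_matching F"]
    even_from_right_subset[of "L \<union> R" "some_max_matching F"]
    odd_from_right_subset[of "L \<union> R" "some_max_matching F"] sides_disjoint
  by auto

lemma maximum_matching_subset_prune:
  assumes "maximum_matching F Z"
  shows "Z \<subseteq> prune (L \<union> R) F" and "L \<union> R - even_set (L \<union> R) F \<subseteq> Vs Z"
proof -
  let ?KL = "koenig_cover (L \<union> R) L F (some_max_matching F)"
  let ?KR = "koenig_cover (L \<union> R) R F (some_max_matching F)"
  note left_tight = unaugmentable.koenig_cover_tight[OF some_max_matching_unaugmentable(1) assms]
  note right_tight = unaugmentable.koenig_cover_tight[OF some_max_matching_unaugmentable(2)
      maximum_matching_converse[OF assms], simplified]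
  note covers = koenig_covers_some_max_matching
  show "L \<union> R - even_set (L \<union> R) F \<subseteq> Vs Z"
    using left_tight(1) right_tight(1) unfolding covers by blast
  show "Z \<subseteq> prune (L \<union> R) F"
  proof
    fix e assume eZ: "e \<in> Z"
    then have eF: "e \<in> F" using assms unfolding maximum_matching_def by auto
    then have "fst e \<in> L" and "snd e \<in> R" using edges_between by auto
    moreover have "\<not> (fst e \<in> ?KL \<and> snd e \<in> ?KL)" using left_tight(2) eZ by blast
    moreover have "(snd e, fst e) \<in> converse Z" using eZ by (cases e) auto
    then have "\<not> (snd e \<in> ?KR \<and> fst e \<in> ?KR)" using bspec[OF right_tight(2)] by fastforce
    ultimately show "e \<in> prune (L \<union> R) F"
      using eF unfolding prune_iff odd_or_unreachable_iff covers by blast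
  qed
qed

lemma maximum_matching_if_subset_prune:
  assumes mX: "matching X" and X_prune: "X \<subseteq> prune (L \<union> R) F"
    and cover: "L \<union> R - even_set (L \<union> R) F \<subseteq> Vs X"
  shows "maximum_matching F X"
proof -
  interpret left: unaugmentable L R F "L \<union> R" "some_max_matching F"
    by (rule some_max_matching_unaugmentable)
  let ?K = "koenig_cover (L \<union> R) L F (some_max_matching F)"
  have XF: "X \<subseteq> F" using X_prune prune_subset by blast
  have "card ?K \<le> card X"
  proof (rule card_le_matching_if_hits)
    show "finite X" using finite_edges XF finite_subset by blast
    show "\<forall>k\<in>?K. \<exists>e\<in>X. k \<in> {fst e, snd e} \<and> \<not> (fst e \<in> ?K \<and> snd e \<in> ?K)"
    proof
      fix k assume "k \<in> ?K"
      then have "k \<in> Vs X"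
        using cover even_odd_disjoint sides_disjoint unfolding koenig_covers_some_max_matching by blast
      then obtain e where e: "e \<in> X" "k \<in> {fst e, snd e}" by (rule Vs_memE)
      then have "e \<in> prune (L \<union> R) F" "fst e \<in> L" "snd e \<in> R"
        using X_prune XF edges_between by auto
      then have "\<not> (fst e \<in> ?K \<and> snd e \<in> ?K)"
        unfolding prune_iff odd_or_unreachable_iff koenig_covers_some_max_matching
        using sides_disjoint by blast
      then show "\<exists>e\<in>X. k \<in> {fst e, snd e} \<and> \<not> (fst e \<in> ?K \<and> snd e \<in> ?K)" using e by blast
    qed
  qed
  then show ?thesis
    using left.card_koenig_cover left.maximum_matching mX XF unfolding maximum_matching_def
    by (metis le_trans)
qed

lemma augment_if_not_maximum:
  assumes "matching X" and "X \<subseteq> F" and "\<not> maximum_matching F X"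
  shows "\<exists>W. matching W \<and> W \<subseteq> F \<and> card X < card W \<and> Vs X \<subseteq> Vs W"
proof -
  obtain vs where "augmenting_path (L \<union> R) F X vs"
    using unaugmentable.maximum_matching[of L R F "L \<union> R" X] assms
    by (metis bipartite_axioms unaugmentable.intro unaugmentable_axioms.intro)
  then show ?thesis using augmenting_path_enlarges[OF assms(1,2)] by blast
qed

end

section \<open>Signatures and rank-maximal matchings\<close>

lemma lex_greater_irrefl: "\<not> lex_greater f f"
  unfolding lex_greater_def by auto

lemma lex_greater_trans: "lex_greater f g \<Longrightarrow> lex_greater g h \<Longrightarrow> lex_greater f h"
  unfolding lex_greater_def by (metis less_trans not_less_iff_gr_or_eq)

lemma lex_greater_total: "f \<noteq> g \<Longrightarrow> lex_greater f g \<or> lex_greater g f"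
proof -
  assume "f \<noteq> g"
  then have ex: "\<exists>i. f i \<noteq> g i" by (auto intro: ext)
  define i where "i = (LEAST i. f i \<noteq> g i)"
  have "f i \<noteq> g i" unfolding i_def using LeastI_ex[OF ex] .
  moreover have "\<forall>j<i. f j = g j" unfolding i_def using not_less_Least by blast
  ultimately show ?thesis unfolding lex_greater_def by (metis linorder_neqE_nat)
qed

lemma lex_greater_extend:
  assumes x: "\<forall>m\<le>n. x m = f m" "x (Suc n) = a" "\<forall>m>Suc n. x m = 0"
    and y: "\<forall>m\<le>n. y m = g m" "y (Suc n) = b" "\<forall>m>Suc n. y m = 0"
    and fg: "\<forall>m>n. f m = 0 \<and> g m = 0"
  shows "lex_greater x y \<longleftrightarrow> lex_greater f g \<or> (f = g \<and> b < a)"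
proof
  assume "lex_greater x y"
  then obtain i where i: "y i < x i" "\<forall>j<i. x j = y j" unfolding lex_greater_def by blast
  consider "i \<le> n" | "i = Suc n" | "Suc n < i" by linarith
  then show "lex_greater f g \<or> (f = g \<and> b < a)"
  proof cases
    case 1
    then have "lex_greater f g" unfolding lex_greater_def using i x(1) y(1) by (intro exI[of _ i]) auto
    then show ?thesis ..
  next
    case 2
    have "f m = g m" for m using i x(1) y(1) fg 2 by (cases "m \<le> n") auto
    then show ?thesis using i x(2) y(2) 2 by auto
  next
    case 3
    then show ?thesis using i x(3) by auto
  qed
next
  assume "lex_greater f g \<or> (f = g \<and> b < a)"
  then show "lex_greater x y"
  proof
    assume "lex_greater f g"
    then obtain i where i: "g i < f i" "\<forall>j<i. f j = g j" unfolding lex_greater_def by blast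
    then have "i \<le> n" using fg by (metis not_le not_less0)
    then show ?thesis unfolding lex_greater_def using i x(1) y(1) by (intro exI[of _ i]) auto
  next
    assume "f = g \<and> b < a"
    then show ?thesis unfolding lex_greater_def using x y by (intro exI[of _ "Suc n"]) auto
  qed
qed

lemma rank_maximal_exists:
  assumes "finite E" shows "\<exists>M. rank_maximal E rk M"
proof -
  define S where "S = {M. matching M \<and> M \<subseteq> E}"
  define less where "less = {(M', M). M' \<in> S \<and> M \<in> S \<and> lex_greater (signature rk M') (signature rk M)}"
  have "finite S" unfolding S_def using assms by (auto intro: finite_subset[of _ "Pow E"])
  moreover have "less \<subseteq> S \<times> S" unfolding less_def by auto
  ultimately have "finite less" using finite_subset by blast
  moreover have "trans less" unfolding less_def trans_def using lex_greater_trans by blast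
  then have "acyclic less"
    unfolding acyclic_def using lex_greater_irrefl by (simp add: trancl_id less_def)
  ultimately have "wf less" by (rule finite_acyclic_wf)
  moreover have "{} \<in> S" unfolding S_def matching_def by simp
  ultimately obtain M where "M \<in> S" "\<forall>M'. (M', M) \<in> less \<longrightarrow> M' \<notin> S"
    using wfE_min by metis
  then have "rank_maximal E rk M" unfolding rank_maximal_def S_def less_def by blast
  then show ?thesis ..
qed

lemma rank_maximal_signature_eq:
  "rank_maximal E rk M \<Longrightarrow> rank_maximal E rk M' \<Longrightarrow> signature rk M = signature rk M'"
  using lex_greater_total unfolding rank_maximal_def by blast

lemma rank_maximal_if_signature_eq:
  "rank_maximal E rk M \<Longrightarrow> matching M' \<Longrightarrow> M' \<subseteq> E \<Longrightarrow> signature rk M' = signature rk M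
    \<Longrightarrow> rank_maximal E rk M'"
  unfolding rank_maximal_def by simp

definition edges_upto :: "'v edges \<Rightarrow> ('v \<times> 'v \<Rightarrow> nat) \<Rightarrow> nat \<Rightarrow> 'v edges" where
  "edges_upto E rk i = {e \<in> E. rk e \<le> i}"

lemma signature_restrict: "m \<le> i \<Longrightarrow> signature rk {e \<in> M. rk e \<le> i} m = signature rk M m"
  unfolding signature_def by (rule arg_cong[where f = card]) auto

lemma signature_above: "M \<subseteq> edges_upto E rk i \<Longrightarrow> i < m \<Longrightarrow> signature rk M m = 0"
  unfolding signature_def edges_upto_def by (auto simp: card_eq_0_iff)

lemma signature_top:
  assumes "M \<subseteq> edges_upto E rk (Suc i)" and "finite M"
  shows "signature rk M (Suc i) = card M - card {e \<in> M. rk e \<le> i}"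
proof -
  have "M = {e \<in> M. rk e \<le> i} \<union> {e \<in> M. rk e = Suc i}"
    using assms(1) unfolding edges_upto_def by auto
  then have "card M = card ({e \<in> M. rk e \<le> i} \<union> {e \<in> M. rk e = Suc i})" by simp
  also have "\<dots> = card {e \<in> M. rk e \<le> i} + card {e \<in> M. rk e = Suc i}"
    using assms(2) by (intro card_Un_disjoint) auto
  finally have "card M = card {e \<in> M. rk e \<le> i} + card {e \<in> M. rk e = Suc i}" .
  then show ?thesis unfolding signature_def by simp
qed

lemma signature_compare_by_card:
  assumes M: "M \<subseteq> edges_upto E rk (Suc i)" "finite M"
    and N: "N \<subseteq> edges_upto E rk (Suc i)" "finite N"
    and low: "signature rk {e \<in> N. rk e \<le> i} = signature rk {e \<in> M. rk e \<le> i}"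
    and card_low: "card {e \<in> N. rk e \<le> i} = card {e \<in> M. rk e \<le> i}"
  shows "card M < card N \<Longrightarrow> lex_greater (signature rk N) (signature rk M)"
    and "card M = card N \<Longrightarrow> signature rk N = signature rk M"
proof -
  have below: "signature rk N m = signature rk M m" if "m \<le> i" for m
    using low signature_restrict[OF that, of rk N] signature_restrict[OF that, of rk M] by metis
  have top: "signature rk N (Suc i) - signature rk M (Suc i) = card N - card M"
    "signature rk M (Suc i) - signature rk N (Suc i) = card M - card N"
    using signature_top[OF M] signature_top[OF N] card_low
      card_mono[OF M(2), of "{e \<in> M. rk e \<le> i}"] card_mono[OF N(2), of "{e \<in> N. rk e \<le> i}"]
    by auto
  show "card M < card N \<Longrightarrow> lex_greater (signature rk N) (signature rk M)"
    unfolding lex_greater_def using below top by (intro exI[of _ "Suc i"]) auto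
  show "card M = card N \<Longrightarrow> signature rk N = signature rk M"
  proof
    fix m assume "card M = card N"
    then show "signature rk N m = signature rk M m"
      using below top signature_above[OF M(1)] signature_above[OF N(1)]
      by (cases "m \<le> i"; cases "m = Suc i") auto
  qed
qed

lemma rank_maximal_restrict:
  assumes "j \<le> i" and rm: "rank_maximal (edges_upto E rk i) rk M"
  shows "rank_maximal (edges_upto E rk j) rk {e \<in> M. rk e \<le> j}"
  unfolding rank_maximal_def
proof (intro conjI allI impI notI)
  have "matching M" "M \<subseteq> edges_upto E rk i" using rm unfolding rank_maximal_def by auto
  then show "matching {e \<in> M. rk e \<le> j}" "{e \<in> M. rk e \<le> j} \<subseteq> edges_upto E rk j"
    using matching_subset[of M "{e \<in> M. rk e \<le> j}"] unfolding edges_upto_def by auto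
  fix Z assume Z: "matching Z \<and> Z \<subseteq> edges_upto E rk j"
    and "lex_greater (signature rk Z) (signature rk {e \<in> M. rk e \<le> j})"
  then obtain l where l: "signature rk {e \<in> M. rk e \<le> j} l < signature rk Z l"
    "\<forall>m<l. signature rk Z m = signature rk {e \<in> M. rk e \<le> j} m"
    unfolding lex_greater_def by blast
  then have "l \<le> j" using signature_above[of Z E rk j l] Z by (metis not_le not_less0)
  then have "lex_greater (signature rk Z) (signature rk M)"
    unfolding lex_greater_def using l signature_restrict[of _ j rk M]
    by (intro exI[of _ l]) auto
  moreover have "Z \<subseteq> edges_upto E rk i" using Z \<open>j \<le> i\<close> unfolding edges_upto_def by auto
  ultimately show False using rm Z unfolding rank_maximal_def by blast
qed

section \<open>Irving's algorithm computes the rank-maximal matchings\<close>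

definition irving_deleted :: "'v set \<Rightarrow> 'v edges \<Rightarrow> ('v \<times> 'v \<Rightarrow> nat) \<Rightarrow> nat \<Rightarrow> 'v set" where
  "irving_deleted V E rk i = snd (irv V E rk i)"

lemma irving_graph_Suc:
  "irving_graph V E rk (Suc i) = prune V (irving_graph V E rk i) \<union>
     {e \<in> E. rk e = Suc i \<and> fst e \<notin> irving_deleted V E rk (Suc i) \<and> snd e \<notin> irving_deleted V E rk (Suc i)}"
  unfolding irving_graph_def irving_deleted_def by (simp add: Let_def)

lemma irving_deleted_Suc:
  "irving_deleted V E rk (Suc i) = irving_deleted V E rk i
     \<union> odd_set V (irving_graph V E rk i) \<union> unr_set V (irving_graph V E rk i)"
  unfolding irving_graph_def irving_deleted_def by (simp add: Let_def)

lemma irving_graph_subset_edges_upto: "irving_graph V E rk i \<subseteq> edges_upto E rk i"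
proof (induction i)
  case 0 then show ?case by (simp add: irving_graph_def)
next
  case (Suc i)
  then show ?case
    unfolding irving_graph_Suc edges_upto_def using prune_subset by fastforce
qed

lemma irving_deleted_subset: "irving_deleted V E rk i \<subseteq> V"
  by (induction i) (auto simp: irving_deleted_def[symmetric] irving_deleted_Suc unr_set_def
      dest: odd_set_subset[THEN subsetD], simp add: irving_deleted_def)

lemma irving_deleted_mono: "irving_deleted V E rk i \<subseteq> irving_deleted V E rk (Suc i)"
  unfolding irving_deleted_Suc by auto

lemma irving_deleted_non_even: "V - even_set V (irving_graph V E rk i) \<subseteq> irving_deleted V E rk (Suc i)"
  unfolding irving_deleted_Suc unr_set_def by auto

definition irving_feasible :: "'v set \<Rightarrow> 'v edges \<Rightarrow> ('v \<times> 'v \<Rightarrow> nat) \<Rightarrow> nat \<Rightarrow> 'v edges \<Rightarrow> bool" where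
  "irving_feasible V E rk i M \<longleftrightarrow>
     matching M \<and> M \<subseteq> prune V (irving_graph V E rk i) \<and> irving_deleted V E rk (Suc i) \<subseteq> Vs M"

locale ranked_bipartite = bipartite L R E for L R :: "'v set" and E :: "'v edges" +
  fixes rk :: "'v \<times> 'v \<Rightarrow> nat"
  assumes ranks_positive: "\<forall>e\<in>E. 1 \<le> rk e"
begin

lemma bipartite_irving_graph: "bipartite L R (irving_graph (L \<union> R) E rk i)"
  using irving_graph_subset_edges_upto unfolding edges_upto_def by (blast intro: bipartite_subset)

lemma finite_edges_upto: "finite (edges_upto E rk i)"
  using finite_edges unfolding edges_upto_def by simp

lemma irving_feasible_maximum:
  assumes "irving_feasible (L \<union> R) E rk i M"
  shows "maximum_matching (irving_graph (L \<union> R) E rk i) M"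
proof (rule bipartite.maximum_matching_if_subset_prune[OF bipartite_irving_graph])
  show "matching M" "M \<subseteq> prune (L \<union> R) (irving_graph (L \<union> R) E rk i)"
    using assms unfolding irving_feasible_def by auto
  show "L \<union> R - even_set (L \<union> R) (irving_graph (L \<union> R) E rk i) \<subseteq> Vs M"
  proof -
    have "irving_deleted (L \<union> R) E rk (Suc i) \<subseteq> Vs M"
      using assms unfolding irving_feasible_def by simp
    with irving_deleted_non_even show ?thesis by (rule subset_trans)
  qed
qed

lemma irving_feasible_restrict:
  assumes "matching M" and M: "M \<subseteq> irving_graph (L \<union> R) E rk (Suc i)"
    and cover: "irving_deleted (L \<union> R) E rk (Suc i) \<subseteq> Vs M"
  shows "irving_feasible (L \<union> R) E rk i {e \<in> M. rk e \<le> i}"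
  unfolding irving_feasible_def
proof (intro conjI)
  show "matching {e \<in> M. rk e \<le> i}" using \<open>matching M\<close> by (rule matching_subset) auto
  show "{e \<in> M. rk e \<le> i} \<subseteq> prune (L \<union> R) (irving_graph (L \<union> R) E rk i)"
    using M irving_graph_Suc by fastforce
  show "irving_deleted (L \<union> R) E rk (Suc i) \<subseteq> Vs {e \<in> M. rk e \<le> i}"
  proof
    fix v assume v: "v \<in> irving_deleted (L \<union> R) E rk (Suc i)"
    then obtain e where e: "e \<in> M" "v \<in> {fst e, snd e}" using cover by (blast elim: Vs_memE)
    then have "e \<in> prune (L \<union> R) (irving_graph (L \<union> R) E rk i)"
      using M v irving_graph_Suc by fastforce
    then have "rk e \<le> i"
      using prune_subset irving_graph_subset_edges_upto unfolding edges_upto_def by blast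
    then show "v \<in> Vs {e \<in> M. rk e \<le> i}" using e by (auto intro: Vs_memI)
  qed
qed

context
  fixes i :: nat
  assumes IH: "\<forall>M. rank_maximal (edges_upto E rk i) rk M \<longleftrightarrow> irving_feasible (L \<union> R) E rk i M"
begin

lemma rank_maximal_Suc_in_irving_graph:
  assumes rm: "rank_maximal (edges_upto E rk (Suc i)) rk M"
  shows "M \<subseteq> irving_graph (L \<union> R) E rk (Suc i)"
    and "irving_deleted (L \<union> R) E rk (Suc i) \<subseteq> Vs M"
proof -
  have mM: "matching M" and M: "M \<subseteq> edges_upto E rk (Suc i)"
    using rm unfolding rank_maximal_def by auto
  let ?M' = "{e \<in> M. rk e \<le> i}"
  have "rank_maximal (edges_upto E rk i) rk ?M'" using rank_maximal_restrict[of i "Suc i"] rm by simp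
  then have "irving_feasible (L \<union> R) E rk i ?M'" using IH by blast
  then have M'_prune: "?M' \<subseteq> prune (L \<union> R) (irving_graph (L \<union> R) E rk i)"
    and cover: "irving_deleted (L \<union> R) E rk (Suc i) \<subseteq> Vs ?M'"
    unfolding irving_feasible_def by auto
  then show "irving_deleted (L \<union> R) E rk (Suc i) \<subseteq> Vs M"
    using Vs_mono[of ?M' M] by blast
  show "M \<subseteq> irving_graph (L \<union> R) E rk (Suc i)"
  proof
    fix e assume eM: "e \<in> M"
    show "e \<in> irving_graph (L \<union> R) E rk (Suc i)"
    proof (cases "rk e \<le> i")
      case True
      then show ?thesis using M'_prune eM irving_graph_Suc by blast
    next
      case False
      have "v \<notin> irving_deleted (L \<union> R) E rk (Suc i)" if v: "v \<in> {fst e, snd e}" for v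
      proof
        assume "v \<in> irving_deleted (L \<union> R) E rk (Suc i)"
        then obtain e' where e': "e' \<in> ?M'" "v \<in> {fst e', snd e'}" using cover by (blast elim: Vs_memE)
        then have "e = e'" using matching_edge_unique[OF mM eM _ v e'(2)] by simp
        then show False using e'(1) False by simp
      qed
      then show ?thesis using False eM M unfolding irving_graph_Suc edges_upto_def by auto
    qed
  qed
qed

lemma rank_maximal_Suc_maximum:
  assumes rm: "rank_maximal (edges_upto E rk (Suc i)) rk M"
  shows "maximum_matching (irving_graph (L \<union> R) E rk (Suc i)) M"
proof (rule ccontr)
  let ?G = "irving_graph (L \<union> R) E rk (Suc i)"
  assume "\<not> maximum_matching ?G M"
  moreover have mM: "matching M" and M: "M \<subseteq> edges_upto E rk (Suc i)"
    using rm unfolding rank_maximal_def by auto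
  ultimately obtain W where W: "matching W" "W \<subseteq> ?G" "card M < card W" "Vs M \<subseteq> Vs W"
    using bipartite.augment_if_not_maximum[OF bipartite_irving_graph]
      rank_maximal_Suc_in_irving_graph(1)[OF rm] by metis
  have W_upto: "W \<subseteq> edges_upto E rk (Suc i)" using W(2) irving_graph_subset_edges_upto by blast
  have "rank_maximal (edges_upto E rk i) rk {e \<in> M. rk e \<le> i}"
    using rank_maximal_restrict[of i "Suc i"] rm by simp
  then have M'_feasible: "irving_feasible (L \<union> R) E rk i {e \<in> M. rk e \<le> i}" using IH by blast
  have W'_feasible: "irving_feasible (L \<union> R) E rk i {e \<in> W. rk e \<le> i}"
    using irving_feasible_restrict[OF W(1,2)] rank_maximal_Suc_in_irving_graph(2)[OF rm] W(4) by blast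
  have "lex_greater (signature rk W) (signature rk M)"
  proof (rule signature_compare_by_card(1)[OF M _ W_upto])
    show "finite M" "finite W"
      using M W_upto finite_edges_upto finite_subset by blast+
    show "signature rk {e \<in> W. rk e \<le> i} = signature rk {e \<in> M. rk e \<le> i}"
      using IH M'_feasible W'_feasible rank_maximal_signature_eq by blast
    show "card {e \<in> W. rk e \<le> i} = card {e \<in> M. rk e \<le> i}"
      using maximum_matching_card_eq irving_feasible_maximum M'_feasible W'_feasible by blast
  qed (use W(3) in simp)
  then show False using rm W(1) W_upto unfolding rank_maximal_def by blast
qed

lemma rank_maximal_Suc_feasible:
  assumes rm: "rank_maximal (edges_upto E rk (Suc i)) rk M"
  shows "irving_feasible (L \<union> R) E rk (Suc i) M"
proof -
  let ?G = "irving_graph (L \<union> R) E rk (Suc i)"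
  note decomposition = bipartite.maximum_matching_subset_prune[OF bipartite_irving_graph
      rank_maximal_Suc_maximum[OF rm]]
  have "odd_set (L \<union> R) ?G \<union> unr_set (L \<union> R) ?G \<subseteq> L \<union> R - even_set (L \<union> R) ?G"
    using bipartite.odd_or_unreachable_iff[OF bipartite_irving_graph] by blast
  then have "irving_deleted (L \<union> R) E rk (Suc (Suc i)) \<subseteq> Vs M"
    using decomposition(2) rank_maximal_Suc_in_irving_graph(2)[OF rm]
    unfolding irving_deleted_Suc[of _ _ _ "Suc i"] by blast
  then show ?thesis
    using rm decomposition(1) unfolding irving_feasible_def rank_maximal_def by blast
qed

lemma feasible_Suc_rank_maximal:
  assumes feasible: "irving_feasible (L \<union> R) E rk (Suc i) M"
  shows "rank_maximal (edges_upto E rk (Suc i)) rk M"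
proof -
  have mM: "matching M" and M_G: "M \<subseteq> irving_graph (L \<union> R) E rk (Suc i)"
    and cover: "irving_deleted (L \<union> R) E rk (Suc (Suc i)) \<subseteq> Vs M"
    using feasible prune_subset unfolding irving_feasible_def by blast+
  have M: "M \<subseteq> edges_upto E rk (Suc i)" using M_G irving_graph_subset_edges_upto by blast
  have M'_feasible: "irving_feasible (L \<union> R) E rk i {e \<in> M. rk e \<le> i}"
    using irving_feasible_restrict[OF mM M_G subset_trans[OF irving_deleted_mono cover]] .
  obtain N where rmN: "rank_maximal (edges_upto E rk (Suc i)) rk N"
    using rank_maximal_exists[OF finite_edges_upto] by blast
  then have N: "N \<subseteq> edges_upto E rk (Suc i)" unfolding rank_maximal_def by auto
  have N'_rm: "rank_maximal (edges_upto E rk i) rk {e \<in> N. rk e \<le> i}"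
    using rank_maximal_restrict[of i "Suc i"] rmN by simp
  have "signature rk M = signature rk N"
  proof (rule signature_compare_by_card(2)[OF N _ M])
    show "finite M" "finite N" using M N finite_edges_upto finite_subset by blast+
    show "signature rk {e \<in> M. rk e \<le> i} = signature rk {e \<in> N. rk e \<le> i}"
      using IH M'_feasible N'_rm rank_maximal_signature_eq by blast
    show "card {e \<in> M. rk e \<le> i} = card {e \<in> N. rk e \<le> i}"
      using IH M'_feasible N'_rm maximum_matching_card_eq irving_feasible_maximum by blast
    show "card N = card M"
      using maximum_matching_card_eq irving_feasible_maximum feasible
        rank_maximal_Suc_feasible[OF rmN] by blast
  qed
  then show ?thesis using rank_maximal_if_signature_eq[OF rmN mM M] by simp
qed

end

theorem rank_maximal_iff_irving_feasible:
  "rank_maximal (edges_upto E rk i) rk M \<longleftrightarrow> irving_feasible (L \<union> R) E rk i M"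
proof (induction i arbitrary: M)
  case 0
  have "edges_upto E rk 0 = {}" using ranks_positive unfolding edges_upto_def by fastforce
  moreover have "irving_graph (L \<union> R) E rk 0 = {}" by (simp add: irving_graph_def)
  moreover have "irving_deleted (L \<union> R) E rk 1 = {}"
    using bipartite.maximum_matching_subset_prune(2)[of L R "{}" "{}"] bipartite_subset[of "{}"]
      bipartite.odd_or_unreachable_iff[of L R "{}"]
    by (fastforce simp: irving_deleted_Suc irving_deleted_def maximum_matching_def matching_def
        irving_graph_def Vs_def)
  ultimately show ?case
    using lex_greater_irrefl prune_subset[of "L \<union> R" "{}"]
    unfolding rank_maximal_def irving_feasible_def by (auto simp: matching_def)
next
  case (Suc i)
  then show ?case using rank_maximal_Suc_feasible feasible_Suc_rank_maximal by blast
qed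

end

section \<open>Counting complete matchings\<close>

definition complete_matchings :: "'v set \<Rightarrow> 'v set \<Rightarrow> 'v edges set" where
  "complete_matchings D Q = {M. M \<subseteq> D \<times> Q \<and> matching M \<and> card M = card D}"

lemma complete_matchings_insert:
  assumes "d \<notin> D" and "finite D" and "finite Q" and disj: "insert d D \<inter> Q = {}"
  shows "complete_matchings (insert d D) Q = (\<Union>q\<in>Q. insert (d, q) ` complete_matchings D (Q - {q}))"
proof
  show "complete_matchings (insert d D) Q \<subseteq> (\<Union>q\<in>Q. insert (d, q) ` complete_matchings D (Q - {q}))"
  proof
    fix M assume "M \<in> complete_matchings (insert d D) Q"
    then have M: "M \<subseteq> insert d D \<times> Q" and mM: "matching M" and cM: "card M = card (insert d D)"
      unfolding complete_matchings_def by auto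
    have finM: "finite M" using M assms(2,3) finite_subset by blast
    have "card (fst ` M) = card (insert d D)" using card_image[OF inj_on_fst_matching[OF mM]] cM by simp
    moreover have "fst ` M \<subseteq> insert d D" using M by auto
    ultimately have "fst ` M = insert d D" using card_subset_eq assms(2) by (metis finite_insert)
    then obtain q where dq: "(d, q) \<in> M" by force
    then have q: "q \<in> Q" using M by auto
    have others: "fst e \<noteq> d \<and> snd e \<noteq> q" if "e \<in> M" "e \<noteq> (d, q)" for e
      using matching_edge_unique[OF mM that(1) dq] that(2) by auto
    have "M - {(d, q)} \<in> complete_matchings D (Q - {q})"
      unfolding complete_matchings_def
    proof (intro CollectI conjI)
      show "M - {(d, q)} \<subseteq> D \<times> (Q - {q})" using M others by fastforce
      show "matching (M - {(d, q)})" using mM by (rule matching_subset) auto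
      show "card (M - {(d, q)}) = card D" using cM dq finM \<open>d \<notin> D\<close> assms(2) by simp
    qed
    moreover have "M = insert (d, q) (M - {(d, q)})" using dq by auto
    ultimately show "M \<in> (\<Union>q\<in>Q. insert (d, q) ` complete_matchings D (Q - {q}))" using q by blast
  qed
  show "(\<Union>q\<in>Q. insert (d, q) ` complete_matchings D (Q - {q})) \<subseteq> complete_matchings (insert d D) Q"
  proof
    fix M assume "M \<in> (\<Union>q\<in>Q. insert (d, q) ` complete_matchings D (Q - {q}))"
    then obtain q M0 where q: "q \<in> Q" and M0: "M0 \<in> complete_matchings D (Q - {q})"
      and M: "M = insert (d, q) M0" by blast
    then have M0_sub: "M0 \<subseteq> D \<times> (Q - {q})" and "matching M0" and "card M0 = card D"
      unfolding complete_matchings_def by auto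
    have "Vs M0 \<subseteq> D \<union> (Q - {q})" using M0_sub by (rule Vs_subset_Times)
    then have "d \<notin> Vs M0" "q \<notin> Vs M0" using \<open>d \<notin> D\<close> disj q by auto
    then have "matching M" unfolding M using matching_insert[OF \<open>matching M0\<close>] by blast
    moreover have "card M = card (insert d D)"
    proof -
      have "finite M0" using M0_sub assms(2,3) finite_subset by blast
      moreover have "(d, q) \<notin> M0" using M0_sub \<open>d \<notin> D\<close> by auto
      ultimately show ?thesis unfolding M using \<open>card M0 = card D\<close> \<open>d \<notin> D\<close> assms(2) by simp
    qed
    ultimately show "M \<in> complete_matchings (insert d D) Q"
      unfolding complete_matchings_def M using M0_sub q by auto
  qed
qed

theorem card_complete_matchings:
  "finite D \<Longrightarrow> finite Q \<Longrightarrow> card Q = card D \<Longrightarrow> D \<inter> Q = {}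
    \<Longrightarrow> card (complete_matchings D Q) = fact (card D)"
proof (induction D arbitrary: Q rule: finite_induct)
  case empty
  then have "complete_matchings {} Q = {{}}" unfolding complete_matchings_def by (auto simp: matching_def)
  then show ?case by simp
next
  case (insert d D)
  let ?part = "\<lambda>q. insert (d, q) ` complete_matchings D (Q - {q})"
  have part_card: "card (?part q) = fact (card D)" if q: "q \<in> Q" for q
  proof -
    have "inj_on (insert (d, q)) (complete_matchings D (Q - {q}))"
    proof (rule inj_onI)
      fix M M' assume "M \<in> complete_matchings D (Q - {q})" "M' \<in> complete_matchings D (Q - {q})"
        and eq: "insert (d, q) M = insert (d, q) M'"
      then have "(d, q) \<notin> M" "(d, q) \<notin> M'"
        using insert.hyps(2) unfolding complete_matchings_def by auto
      then show "M = M'" using eq by (simp add: insert_ident)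
    qed
    moreover have "card (complete_matchings D (Q - {q})) = fact (card D)"
      using insert q by (intro insert.IH) auto
    ultimately show ?thesis by (simp add: card_image)
  qed
  have part_finite: "finite (?part q)" for q
  proof -
    have "complete_matchings D (Q - {q}) \<subseteq> Pow (D \<times> Q)" unfolding complete_matchings_def by auto
    moreover have "finite (Pow (D \<times> Q))" using insert.hyps(1) insert.prems(1) by simp
    ultimately show ?thesis by (blast intro: finite_subset finite_imageI)
  qed
  have part_disjoint: "?part q \<inter> ?part q' = {}" if "q \<in> Q" "q' \<in> Q" "q \<noteq> q'" for q q'
    using that insert.hyps(2) unfolding complete_matchings_def by auto
  have "card (complete_matchings (insert d D) Q) = (\<Sum>q\<in>Q. card (?part q))"
    unfolding complete_matchings_insert[OF insert.hyps(2,1) insert.prems(1,3)]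
    using part_finite part_disjoint by (intro card_UN_disjoint insert.prems(1)) auto
  also have "\<dots> = card Q * fact (card D)" using part_card by simp
  also have "\<dots> = fact (card (insert d D))" using insert by simp
  finally show ?case .
qed

section \<open>The instance with last-resort posts and dummy applicants\<close>

locale last_resort_instance =
  fixes A P0 P D :: "'v set" and E0 E EH :: "'v edges"
    and rk rkH :: "'v \<times> 'v \<Rightarrow> nat" and r k :: nat and lr :: "'v \<Rightarrow> 'v"
    and M :: "'v edges"
  assumes finite_applicants: "finite A" and finite_posts0: "finite P0"
    and applicants_posts0_disjoint: "A \<inter> P0 = {}"
    and edges0_between: "E0 \<subseteq> A \<times> P0" and ranks0: "\<forall>e\<in>E0. rk e \<in> {1..r}"
    and inj_last_resort: "inj_on lr A" and last_resort_fresh: "lr ` A \<inter> (A \<union> P0) = {}"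
    and posts: "P = P0 \<union> lr ` A"
    and edges: "E = E0 \<union> (\<lambda>a. (a, lr a)) ` A"
    and last_resort_rank: "\<forall>a\<in>A. rk (a, lr a) = r + 1"
    and rank_maximal_M: "rank_maximal E rk M"
    and k_eq: "k = card (P - Vs M)"
    and finite_dummies: "finite D" and card_dummies: "card D = k"
    and dummies_fresh: "D \<inter> (A \<union> P) = {}"
    and edges_H: "EH = E \<union> D \<times> (P \<inter> (\<Inter>i\<in>{1..r+1}. irving_even (A \<union> P) E rk i))"
    and ranks_H_old: "\<forall>e\<in>E. rkH e = rk e"
    and ranks_H_new: "\<forall>e\<in>EH - E. rkH e = r + 2"
begin

lemma edges_between: "E \<subseteq> A \<times> P"
  using edges0_between edges posts by auto

lemma edges_H_between: "EH \<subseteq> (A \<union> D) \<times> P"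
  using edges_H edges_between by auto

lemma finite_posts: "finite P"
  using posts finite_posts0 finite_applicants by simp

lemma finite_edges: "finite E"
  using edges_between finite_applicants finite_posts by (meson finite_SigmaI finite_subset)

lemma ranks_between: "e \<in> E \<Longrightarrow> 1 \<le> rk e \<and> rk e \<le> r + 1"
  using ranks0 last_resort_rank edges by auto

lemma ranks_H_between: "e \<in> EH \<Longrightarrow> 1 \<le> rkH e \<and> rkH e \<le> r + 2"
  using ranks_H_old ranks_H_new ranks_between[of e] by (cases "e \<in> E") auto

lemma ranked_G: "ranked_bipartite A P E rk"
  using edges_between applicants_posts0_disjoint last_resort_fresh posts finite_applicants
    finite_posts ranks_between
  by unfold_locales auto

lemma ranked_H: "ranked_bipartite (A \<union> D) P EH rkH"
proof unfold_locales
  show "\<forall>e\<in>EH. 1 \<le> rkH e" using ranks_H_between by blast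
qed (use edges_H_between dummies_fresh applicants_posts0_disjoint last_resort_fresh posts
      finite_applicants finite_dummies finite_posts in auto)

lemma edges_upto_G: "edges_upto E rk (r + 1) = E"
  using ranks_between unfolding edges_upto_def by auto

lemma edges_upto_H: "edges_upto EH rkH (r + 2) = EH"
  using ranks_H_between unfolding edges_upto_def by auto

lemma rank_maximal_G_iff:
  "rank_maximal (edges_upto E rk i) rk N \<longleftrightarrow> irving_feasible (A \<union> P) E rk i N"
  by (rule ranked_bipartite.rank_maximal_iff_irving_feasible[OF ranked_G])

lemma rank_maximal_H_iff_feasible:
  "rank_maximal EH rkH N \<longleftrightarrow> irving_feasible (A \<union> D \<union> P) EH rkH (r + 2) N"
  using ranked_bipartite.rank_maximal_iff_irving_feasible[OF ranked_H, of "r + 2"] edges_upto_H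
  by simp

text \<open>A post left unmatched by a rank-maximal matching is never deleted by the algorithm,
  hence it is even in every round; so every dummy applicant may be matched to it.\<close>

lemma unmatched_posts_even:
  assumes rm: "rank_maximal E rk N" and p: "p \<in> P - Vs N" and i: "i \<in> {1..r+1}"
  shows "p \<in> irving_even (A \<union> P) E rk i"
proof -
  have "rank_maximal (edges_upto E rk i) rk {e \<in> N. rk e \<le> i}"
    using rank_maximal_restrict[of i "r + 1" E rk N] i rm edges_upto_G by simp
  then have "irving_deleted (A \<union> P) E rk (Suc i) \<subseteq> Vs {e \<in> N. rk e \<le> i}"
    using rank_maximal_G_iff unfolding irving_feasible_def by blast
  moreover have "Vs {e \<in> N. rk e \<le> i} \<subseteq> Vs N" by (rule Vs_mono) auto
  ultimately have "p \<notin> irving_deleted (A \<union> P) E rk (Suc i)" using p by blast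
  then show ?thesis
    using irving_deleted_non_even[of "A \<union> P" E rk i] p unfolding irving_even_def by blast
qed

lemma last_resort_post_free:
  assumes "N \<subseteq> E" and a: "a \<in> A" and a_free: "a \<notin> Vs N"
  shows "lr a \<notin> Vs N"
proof
  assume "lr a \<in> Vs N"
  then obtain e where e: "e \<in> N" "lr a \<in> {fst e, snd e}" by (rule Vs_memE)
  have "lr a \<notin> A" "lr a \<notin> P0" using last_resort_fresh a by auto
  moreover have "fst e \<in> A" using e(1) assms(1) edges_between by auto
  ultimately have "snd e = lr a" using e(2) by auto
  then have "e \<notin> E0" using edges0_between \<open>lr a \<notin> P0\<close> by auto
  then obtain b where "b \<in> A" "e = (b, lr b)" using assms(1) e(1) edges by auto
  then have "e = (a, lr a)" using \<open>snd e = lr a\<close> inj_last_resort a by (auto dest: inj_onD)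
  then show False using a_free Vs_memI[OF e(1), of a] by simp
qed

text \<open>Otherwise the unmatched applicant could be matched to its own last-resort post, which would
  raise the last entry of the signature.\<close>

lemma rank_maximal_matches_applicants:
  assumes rm: "rank_maximal E rk N"
  shows "A \<subseteq> Vs N"
proof
  fix a assume a: "a \<in> A"
  show "a \<in> Vs N"
  proof (rule ccontr)
    assume a_free: "a \<notin> Vs N"
    have mN: "matching N" and NE: "N \<subseteq> E" using rm unfolding rank_maximal_def by auto
    have "matching (insert (a, lr a) N)"
      by (rule matching_insert[OF mN a_free last_resort_post_free[OF NE a a_free]])
    moreover have "insert (a, lr a) N \<subseteq> E" using NE a edges by auto
    moreover have "lex_greater (signature rk (insert (a, lr a) N)) (signature rk N)"
    proof -
      have fin: "finite N" using NE finite_edges finite_subset by blast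
      have new: "(a, lr a) \<notin> N" using a_free Vs_memI[of "(a, lr a)" N a] by auto
      have "signature rk (insert (a, lr a) N) m = signature rk N m" if "m \<noteq> r + 1" for m
        unfolding signature_def using that last_resort_rank a by (auto intro: arg_cong[where f = card])
      moreover have "{e \<in> insert (a, lr a) N. rk e = r + 1} = insert (a, lr a) {e \<in> N. rk e = r + 1}"
        using last_resort_rank a by auto
      then have "signature rk (insert (a, lr a) N) (r + 1) = Suc (signature rk N (r + 1))"
        unfolding signature_def using new fin by simp
      ultimately show ?thesis unfolding lex_greater_def by (intro exI[of _ "r + 1"]) auto
    qed
    ultimately show False using rm unfolding rank_maximal_def by blast
  qed
qed

lemma rank_maximal_card:
  assumes rm: "rank_maximal E rk N"
  shows "card N = card A" and "card (P \<inter> Vs N) = card A"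
proof -
  have mN: "matching N" and NE: "N \<subseteq> E" using rm unfolding rank_maximal_def by auto
  have disj: "A \<inter> P = {}" using applicants_posts0_disjoint last_resort_fresh posts by auto
  have "fst ` N = A"
  proof
    show "fst ` N \<subseteq> A" using NE edges_between by auto
    show "A \<subseteq> fst ` N"
    proof
      fix a assume a: "a \<in> A"
      then obtain e where e: "e \<in> N" "a \<in> {fst e, snd e}"
        using rank_maximal_matches_applicants[OF rm] by (blast elim: Vs_memE)
      moreover have "snd e \<in> P" using e(1) NE edges_between by auto
      ultimately show "a \<in> fst ` N" using a disj by auto
    qed
  qed
  then show "card N = card A" using card_image[OF inj_on_fst_matching[OF mN]] by simp
  moreover have "P \<inter> Vs N = snd ` N"
  proof
    show "P \<inter> Vs N \<subseteq> snd ` N"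
    proof
      fix p assume p: "p \<in> P \<inter> Vs N"
      then obtain e where e: "e \<in> N" "p \<in> {fst e, snd e}" by (blast elim: Vs_memE)
      moreover have "fst e \<in> A" using e(1) NE edges_between by auto
      ultimately show "p \<in> snd ` N" using p disj by auto
    qed
    show "snd ` N \<subseteq> P \<inter> Vs N" using NE edges_between by (auto intro: Vs_memI)
  qed
  ultimately show "card (P \<inter> Vs N) = card A" using card_image[OF inj_on_snd_matching[OF mN]] by simp
qed

lemma card_unmatched_posts:
  assumes "rank_maximal E rk N"
  shows "card (P - Vs N) = k" and "card A + k = card P"
proof -
  have "card (P - Vs N) = card P - card A" "card A \<le> card P"
    using rank_maximal_card(2)[OF assms] finite_posts card_mono[of P "P \<inter> Vs N"]
    by (auto simp: Diff_Int[symmetric] card_Diff_subset_Int)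
  moreover have "card (P - Vs M) = card P - card A"
    using rank_maximal_card(2)[OF rank_maximal_M] finite_posts
    by (auto simp: card_Diff_subset_Int)
  ultimately show "card (P - Vs N) = k" "card A + k = card P" using k_eq by auto
qed

lemma finite_edges_H: "finite EH"
  using edges_H_between finite_applicants finite_dummies finite_posts
  by (meson finite_SigmaI finite_Un finite_subset)

lemma edges_H_split:
  assumes "X \<subseteq> EH"
  shows "{e \<in> X. fst e \<in> A} \<subseteq> E" and "{e \<in> X. fst e \<in> D} \<subseteq> D \<times> P"
    and "X = {e \<in> X. fst e \<in> A} \<union> {e \<in> X. fst e \<in> D}"
proof -
  show "{e \<in> X. fst e \<in> A} \<subseteq> E" using assms edges_H dummies_fresh by fastforce
  show "{e \<in> X. fst e \<in> D} \<subseteq> D \<times> P" "X = {e \<in> X. fst e \<in> A} \<union> {e \<in> X. fst e \<in> D}"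
    using assms edges_H_between by auto
qed

lemma signature_H:
  assumes X: "X \<subseteq> EH"
  shows "m \<le> r + 1 \<Longrightarrow> signature rkH X m = signature rk {e \<in> X. fst e \<in> A} m"
    and "signature rkH X (r + 2) = card {e \<in> X. fst e \<in> D}"
    and "r + 2 < m \<Longrightarrow> signature rkH X m = 0"
proof -
  have old: "rkH e = rk e \<and> rk e \<le> r + 1" if "e \<in> X" "fst e \<in> A" for e
  proof -
    have "e \<in> E" using that edges_H_split(1)[OF X] by blast
    then show ?thesis using ranks_H_old ranks_between[of e] by auto
  qed
  have new: "rkH e = r + 2" if "e \<in> X" "fst e \<notin> A" for e
  proof -
    have "e \<notin> E" using that(2) edges_between by auto
    then show ?thesis using that(1) X ranks_H_new by auto
  qed
  show "m \<le> r + 1 \<Longrightarrow> signature rkH X m = signature rk {e \<in> X. fst e \<in> A} m"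
  proof -
    assume "m \<le> r + 1"
    then have "{e \<in> X. rkH e = m} = {e \<in> {e \<in> X. fst e \<in> A}. rk e = m}"
      using old new by force
    then show ?thesis unfolding signature_def by simp
  qed
  have "{e \<in> X. rkH e = r + 2} = {e \<in> X. fst e \<in> D}"
  proof (intro set_eqI iffI)
    fix e assume "e \<in> {e \<in> X. rkH e = r + 2}"
    then show "e \<in> {e \<in> X. fst e \<in> D}" using old[of e] edges_H_split(3)[OF X] by force
  next
    fix e assume "e \<in> {e \<in> X. fst e \<in> D}"
    then show "e \<in> {e \<in> X. rkH e = r + 2}" using new[of e] dummies_fresh by auto
  qed
  then show "signature rkH X (r + 2) = card {e \<in> X. fst e \<in> D}" unfolding signature_def by simp
  show "r + 2 < m \<Longrightarrow> signature rkH X m = 0"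
    using signature_above[of X EH rkH "r + 2" m] X edges_upto_H by simp
qed

lemma lex_greater_signature_H:
  assumes X: "X \<subseteq> EH" and Z: "Z \<subseteq> EH"
  shows "lex_greater (signature rkH Z) (signature rkH X) \<longleftrightarrow>
      lex_greater (signature rk {e \<in> Z. fst e \<in> A}) (signature rk {e \<in> X. fst e \<in> A})
    \<or> (signature rk {e \<in> Z. fst e \<in> A} = signature rk {e \<in> X. fst e \<in> A}
       \<and> card {e \<in> X. fst e \<in> D} < card {e \<in> Z. fst e \<in> D})"
proof (rule lex_greater_extend[where n = "r + 1"])
  have "signature rk {e \<in> Y. fst e \<in> A} m = 0" if "Y \<subseteq> EH" "r + 1 < m" for Y m
    using signature_above[of _ E rk "r + 1" m] edges_H_split(1)[OF that(1)] that(2) edges_upto_G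
    by simp
  then show "\<forall>m>r + 1. signature rk {e \<in> Z. fst e \<in> A} m = 0 \<and> signature rk {e \<in> X. fst e \<in> A} m = 0"
    using X Z by blast
qed (use signature_H[OF X] signature_H[OF Z] in auto)

lemma card_dummy_part: "matching X \<Longrightarrow> card {e \<in> X. fst e \<in> D} \<le> k"
  using card_inj_on_le[of fst "{e \<in> X. fst e \<in> D}" D] inj_on_fst_matching matching_subset
    finite_dummies card_dummies
  by (metis (no_types, lifting) image_subset_iff mem_Collect_eq subsetI)

lemma extension_H:
  assumes rm: "rank_maximal E rk N" and Y: "Y \<in> complete_matchings D (P - Vs N)"
  shows "matching (N \<union> Y)" and "N \<union> Y \<subseteq> EH"
    and "{e \<in> N \<union> Y. fst e \<in> A} = N" and "{e \<in> N \<union> Y. fst e \<in> D} = Y"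
proof -
  have mN: "matching N" and NE: "N \<subseteq> E" using rm unfolding rank_maximal_def by auto
  have Y_sub: "Y \<subseteq> D \<times> (P - Vs N)" and mY: "matching Y"
    using Y unfolding complete_matchings_def by auto
  have "Vs Y \<subseteq> D \<union> (P - Vs N)" using Y_sub by (rule Vs_subset_Times)
  moreover have "Vs N \<subseteq> A \<union> P" using NE edges_between by (intro Vs_subset_Times) auto
  ultimately have "Vs N \<inter> Vs Y = {}" using dummies_fresh by blast
  then show "matching (N \<union> Y)" by (rule matching_Un[OF mN mY])
  show "N \<union> Y \<subseteq> EH" using NE Y_sub unmatched_posts_even[OF rm] edges_H by blast
  have "fst e \<in> A" if "e \<in> N" for e using that NE edges_between by auto
  then show "{e \<in> N \<union> Y. fst e \<in> A} = N" "{e \<in> N \<union> Y. fst e \<in> D} = Y"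
    using Y_sub dummies_fresh by auto
qed

lemma card_complete_matchings_unmatched:
  assumes "rank_maximal E rk N"
  shows "card (complete_matchings D (P - Vs N)) = fact k"
  using card_complete_matchings[OF finite_dummies, of "P - Vs N"] finite_posts dummies_fresh
    card_unmatched_posts(1)[OF assms] card_dummies
  by auto

lemma rank_maximal_H_parts:
  assumes rmX: "rank_maximal EH rkH X"
  shows "rank_maximal E rk {e \<in> X. fst e \<in> A}" and "card {e \<in> X. fst e \<in> D} = k"
proof -
  have mX: "matching X" and X: "X \<subseteq> EH" using rmX unfolding rank_maximal_def by auto
  have "complete_matchings D (P - Vs M) \<noteq> {}"
    using card_complete_matchings_unmatched[OF rank_maximal_M] by force
  then obtain Y where Y: "Y \<in> complete_matchings D (P - Vs M)" by blast
  note MY = extension_H[OF rank_maximal_M Y]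
  have card_Y: "card Y = k" using Y card_dummies unfolding complete_matchings_def by simp
  have XA: "matching {e \<in> X. fst e \<in> A}" "{e \<in> X. fst e \<in> A} \<subseteq> E"
    using matching_subset[OF mX] edges_H_split(1)[OF X] by auto
  have not_better: "\<not> lex_greater (signature rkH (M \<union> Y)) (signature rkH X)"
    using rmX MY(1,2) unfolding rank_maximal_def by blast
  have "\<not> lex_greater (signature rk {e \<in> X. fst e \<in> A}) (signature rk M)"
    using rank_maximal_M XA unfolding rank_maximal_def by blast
  then have same: "signature rk {e \<in> X. fst e \<in> A} = signature rk M"
    using not_better lex_greater_total unfolding lex_greater_signature_H[OF X MY(2)] MY(3) by blast
  then show "rank_maximal E rk {e \<in> X. fst e \<in> A}"
    by (rule rank_maximal_if_signature_eq[OF rank_maximal_M XA])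
  show "card {e \<in> X. fst e \<in> D} = k"
    using not_better same card_dummy_part[OF mX] card_Y
    unfolding lex_greater_signature_H[OF X MY(2)] MY(3,4) by auto
qed

lemma rank_maximal_H_if_parts:
  assumes X: "X \<subseteq> EH" and "matching X" and rmA: "rank_maximal E rk {e \<in> X. fst e \<in> A}"
    and card_D: "card {e \<in> X. fst e \<in> D} = k"
  shows "rank_maximal EH rkH X"
  unfolding rank_maximal_def
proof (intro conjI allI impI notI)
  fix Z assume Z: "matching Z \<and> Z \<subseteq> EH" and better: "lex_greater (signature rkH Z) (signature rkH X)"
  have "matching {e \<in> Z. fst e \<in> A}" "{e \<in> Z. fst e \<in> A} \<subseteq> E"
    using Z matching_subset[of Z "{e \<in> Z. fst e \<in> A}"] edges_H_split(1)[of Z] by auto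
  then have "\<not> lex_greater (signature rk {e \<in> Z. fst e \<in> A}) (signature rk {e \<in> X. fst e \<in> A})"
    using rmA unfolding rank_maximal_def by blast
  moreover have "\<not> card {e \<in> X. fst e \<in> D} < card {e \<in> Z. fst e \<in> D}"
    using card_D card_dummy_part Z by (simp add: not_less)
  ultimately show False using better unfolding lex_greater_signature_H[OF X conjunct2[OF Z]] by blast
qed (use assms in auto)

theorem rank_maximal_H_iff:
  "rank_maximal EH rkH X \<longleftrightarrow>
     matching X \<and> X \<subseteq> EH \<and> rank_maximal E rk {e \<in> X. fst e \<in> A} \<and> card {e \<in> X. fst e \<in> D} = k"
  using rank_maximal_H_parts rank_maximal_H_if_parts unfolding rank_maximal_def by blast

end

context last_resort_instance
begin

lemma dummy_part_complete_matching:
  assumes rmX: "rank_maximal EH rkH X" and XA: "{e \<in> X. fst e \<in> A} = N"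
  shows "{e \<in> X. fst e \<in> D} \<in> complete_matchings D (P - Vs N)"
    and "X = N \<union> {e \<in> X. fst e \<in> D}"
proof -
  have mX: "matching X" and X: "X \<subseteq> EH" and card_D: "card {e \<in> X. fst e \<in> D} = k"
    using rmX rank_maximal_H_iff by auto
  show "X = N \<union> {e \<in> X. fst e \<in> D}" using edges_H_split(3)[OF X] XA by simp
  have "{e \<in> X. fst e \<in> D} \<subseteq> D \<times> (P - Vs N)"
  proof
    fix e assume e: "e \<in> {e \<in> X. fst e \<in> D}"
    have "snd e \<notin> Vs N"
    proof
      assume "snd e \<in> Vs N"
      then obtain e' where e': "e' \<in> N" "snd e \<in> {fst e', snd e'}" by (rule Vs_memE)
      moreover have "e \<in> X" "e' \<in> X" using e e'(1) XA by auto
      ultimately have "e = e'" using matching_edge_unique[OF mX, of e e' "snd e"] by simp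
      moreover have "fst e' \<in> A" using e'(1) XA by blast
      moreover have "fst e \<in> D" using e by simp
      ultimately show False using dummies_fresh by blast
    qed
    then show "e \<in> D \<times> (P - Vs N)" using e edges_H_split(2)[OF X] by auto
  qed
  moreover have "matching {e \<in> X. fst e \<in> D}" using mX by (rule matching_subset) auto
  ultimately show "{e \<in> X. fst e \<in> D} \<in> complete_matchings D (P - Vs N)"
    unfolding complete_matchings_def using card_D card_dummies by simp
qed

lemma rank_maximal_H_extensions:
  assumes rm: "rank_maximal E rk N"
  shows "{N'. rank_maximal EH rkH N' \<and> {e \<in> N'. fst e \<in> A} = N}
    = (\<lambda>Y. N \<union> Y) ` complete_matchings D (P - Vs N)"
proof (intro set_eqI iffI)
  fix X assume "X \<in> {N'. rank_maximal EH rkH N' \<and> {e \<in> N'. fst e \<in> A} = N}"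
  then have "rank_maximal EH rkH X" "{e \<in> X. fst e \<in> A} = N" by auto
  note dummy_part = dummy_part_complete_matching[OF this]
  show "X \<in> (\<lambda>Y. N \<union> Y) ` complete_matchings D (P - Vs N)"
    by (rule image_eqI[of _ _ "{e \<in> X. fst e \<in> D}"]) (use dummy_part in simp_all)
next
  fix X assume "X \<in> (\<lambda>Y. N \<union> Y) ` complete_matchings D (P - Vs N)"
  then obtain Y where Y: "Y \<in> complete_matchings D (P - Vs N)" and X: "X = N \<union> Y" by blast
  have "card Y = k" using Y card_dummies unfolding complete_matchings_def by simp
  then show "X \<in> {N'. rank_maximal EH rkH N' \<and> {e \<in> N'. fst e \<in> A} = N}"
    using extension_H[OF rm Y] rank_maximal_H_iff rm unfolding X by simp
qed

theorem card_rank_maximal_extensions: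
  assumes rm: "rank_maximal E rk N"
  shows "card {N'. rank_maximal EH rkH N' \<and> {e \<in> N'. fst e \<in> A} = N} = fact k"
proof -
  have "inj_on (\<lambda>Y. N \<union> Y) (complete_matchings D (P - Vs N))"
  proof (rule inj_onI)
    fix Y Y' assume "Y \<in> complete_matchings D (P - Vs N)" "Y' \<in> complete_matchings D (P - Vs N)"
      and "N \<union> Y = N \<union> Y'"
    then show "Y = Y'" using extension_H(4)[OF rm, of Y] extension_H(4)[OF rm, of Y'] by simp
  qed
  then show ?thesis
    unfolding rank_maximal_H_extensions[OF rm]
    using card_complete_matchings_unmatched[OF rm] by (simp add: card_image)
qed

lemma rank_maximal_H_matches_dummies:
  assumes "rank_maximal EH rkH N'"
  shows "D \<subseteq> Vs N'"
proof -
  have "matching N'" using assms unfolding rank_maximal_def by auto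
  then have "matching {e \<in> N'. fst e \<in> D}" by (rule matching_subset) auto
  then have "card (fst ` {e \<in> N'. fst e \<in> D}) = card {e \<in> N'. fst e \<in> D}"
    by (rule card_image[OF inj_on_fst_matching])
  also have "\<dots> = card D" using rank_maximal_H_parts(2)[OF assms] card_dummies by simp
  finally have "card (fst ` {e \<in> N'. fst e \<in> D}) = card D" .
  moreover have "fst ` {e \<in> N'. fst e \<in> D} \<subseteq> D" by auto
  ultimately have "fst ` {e \<in> N'. fst e \<in> D} = D" using card_subset_eq[OF finite_dummies] by blast
  then show ?thesis unfolding Vs_def by auto
qed

lemma rank_maximal_H_matches_posts:
  assumes "rank_maximal EH rkH N'"
  shows "P \<subseteq> Vs N'"
proof -
  have mN': "matching N'" and N': "N' \<subseteq> EH" using assms unfolding rank_maximal_def by auto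
  have "card N' = card ({e \<in> N'. fst e \<in> A} \<union> {e \<in> N'. fst e \<in> D})"
    using arg_cong[where f = card, OF edges_H_split(3)[OF N']] .
  also have "\<dots> = card {e \<in> N'. fst e \<in> A} + card {e \<in> N'. fst e \<in> D}"
    using N' finite_edges_H finite_subset dummies_fresh by (intro card_Un_disjoint) auto
  also have "\<dots> = card P"
    using rank_maximal_card(1)[OF rank_maximal_H_parts(1)[OF assms]] rank_maximal_H_parts(2)[OF assms]
      card_unmatched_posts(2)[OF rank_maximal_M] by simp
  finally have "card (snd ` N') = card P" using card_image[OF inj_on_snd_matching[OF mN']] by simp
  moreover have "snd ` N' \<subseteq> P" using N' edges_H_between by auto
  ultimately have "snd ` N' = P" using card_subset_eq[OF finite_posts] by blast
  then show ?thesis unfolding Vs_def by auto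
qed

theorem rank_maximal_H_perfect:
  assumes rm: "rank_maximal EH rkH N'"
  shows "A \<union> D \<subseteq> Vs N'" and "P \<subseteq> Vs N'"
    and "N' \<subseteq> reduced_graph (A \<union> D \<union> P) EH rkH (r + 2)"
    and "perfect_matching (A \<union> D \<union> P) (reduced_graph (A \<union> D \<union> P) EH rkH (r + 2)) N'"
proof -
  show "A \<union> D \<subseteq> Vs N'"
    using rank_maximal_matches_applicants[OF rank_maximal_H_parts(1)[OF rm]]
      Vs_mono[of "{e \<in> N'. fst e \<in> A}" N'] rank_maximal_H_matches_dummies[OF rm] by blast
  moreover show "P \<subseteq> Vs N'" using rm by (rule rank_maximal_H_matches_posts)
  moreover show "N' \<subseteq> reduced_graph (A \<union> D \<union> P) EH rkH (r + 2)"
    using rm rank_maximal_H_iff_feasible unfolding irving_feasible_def reduced_graph_def by blast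
  ultimately show "perfect_matching (A \<union> D \<union> P) (reduced_graph (A \<union> D \<union> P) EH rkH (r + 2)) N'"
    using rm unfolding perfect_matching_def rank_maximal_def by blast
qed

theorem no_perfect_extension_of_non_rank_maximal:
  assumes "\<not> rank_maximal E rk N"
  shows "\<not> (\<exists>N'. perfect_matching (A \<union> D \<union> P) (reduced_graph (A \<union> D \<union> P) EH rkH (r + 2)) N'
            \<and> {e \<in> N'. fst e \<in> A} = N)"
proof
  assume "\<exists>N'. perfect_matching (A \<union> D \<union> P) (reduced_graph (A \<union> D \<union> P) EH rkH (r + 2)) N'
            \<and> {e \<in> N'. fst e \<in> A} = N"
  then obtain N' where pm: "perfect_matching (A \<union> D \<union> P) (reduced_graph (A \<union> D \<union> P) EH rkH (r + 2)) N'"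
    and N: "{e \<in> N'. fst e \<in> A} = N" by blast
  have mN': "matching N'" and reduced: "N' \<subseteq> prune (A \<union> D \<union> P) (irving_graph (A \<union> D \<union> P) EH rkH (r + 2))"
    and cover: "A \<union> D \<union> P \<subseteq> Vs N'"
    using pm unfolding perfect_matching_def reduced_graph_def by auto
  have "irving_deleted (A \<union> D \<union> P) EH rkH (Suc (r + 2)) \<subseteq> Vs N'"
    using irving_deleted_subset cover by (rule subset_trans)
  then have "irving_feasible (A \<union> D \<union> P) EH rkH (r + 2) N'"
    unfolding irving_feasible_def using mN' reduced by blast
  then have "rank_maximal EH rkH N'" using rank_maximal_H_iff_feasible by blast
  then have "rank_maximal E rk N" using rank_maximal_H_iff N by blast
  then show False using assms by blast
qed

end

theorem lemma6:
  fixes A P0 P D :: "'v set" and E0 E EH :: "'v edges"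
    and rk rkH :: "'v \<times> 'v \<Rightarrow> nat" and r k :: nat and lr :: "'v \<Rightarrow> 'v"
    and M :: "'v edges"
  assumes "finite A" and "finite P0" and "A \<inter> P0 = {}"
    and "E0 \<subseteq> A \<times> P0" and "\<forall>e\<in>E0. rk e \<in> {1..r}"
    \<comment> \<open>last-resort posts\<close>
    and "inj_on lr A" and "lr ` A \<inter> (A \<union> P0) = {}"
    and "P = P0 \<union> lr ` A"
    and "E = E0 \<union> (\<lambda>a. (a, lr a)) ` A"
    and "\<forall>a\<in>A. rk (a, lr a) = r + 1"
    \<comment> \<open>M rank-maximal in G, k posts unmatched\<close>
    and "rank_maximal E rk M"
    and "k = card (P - Vs M)"
    \<comment> \<open>the instance H\<close>
    and "finite D" and "card D = k" and "D \<inter> (A \<union> P) = {}"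
    and "EH = E \<union> D \<times> (P \<inter> (\<Inter>i\<in>{1..r+1}. irving_even (A \<union> P) E rk i))"
    and "\<forall>e\<in>E. rkH e = rk e"
    and "\<forall>e\<in>EH - E. rkH e = r + 2"
  shows
    "(\<forall>N. rank_maximal E rk N \<longrightarrow>
        card {N'. rank_maximal EH rkH N' \<and> {e \<in> N'. fst e \<in> A} = N} = fact k)
   \<and> (\<forall>N'. rank_maximal EH rkH N' \<longrightarrow>
        A \<union> D \<subseteq> Vs N' \<and> P \<subseteq> Vs N'
        \<and> N' \<subseteq> reduced_graph (A \<union> D \<union> P) EH rkH (r + 2)
        \<and> perfect_matching (A \<union> D \<union> P) (reduced_graph (A \<union> D \<union> P) EH rkH (r + 2)) N')
   \<and> (\<forall>N. matching N \<and> N \<subseteq> E \<and> \<not> rank_maximal E rk N \<longrightarrow>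
        \<not> (\<exists>N'. perfect_matching (A \<union> D \<union> P) (reduced_graph (A \<union> D \<union> P) EH rkH (r + 2)) N'
               \<and> {e \<in> N'. fst e \<in> A} = N))"
proof -
  interpret last_resort_instance A P0 P D E0 E EH rk rkH r k lr M
    by (rule last_resort_instance.intro) (fact assms)+
  show ?thesis
    using card_rank_maximal_extensions rank_maximal_H_perfect no_perfect_extension_of_non_rank_maximal
    by blast
qed

end
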